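(* Let $C_0,\beta_h,\gamma_h,\beta_v,\gamma_v>0$ with $\mathcal{R}_0=\sqrt{\frac{\beta_h}{\gamma_v}\cdot\frac{C_0\beta_v}{\gamma_h}}>1$. Let \[i_h^e=\frac{C_0\beta_h\beta_v-\gamma_h\gamma_v}{C_0\beta_h\beta_v+\beta_v\gamma_h},\quad i_v^e=\frac{C_0\beta_h\beta_v-\gamma_h\gamma_v}{\beta_h\beta_v+\beta_h\gamma_v},\quad s_h^e=1-i_h^e,\quad s_v^e=C_0-i_v^e,\] \[C_e=\begin{pmatrix}-(\gamma_h+\beta_h i_v^e)&0&\beta_h s_h^e\\-\beta_v s_v^e&-\beta_v i_h^e&\gamma_v\\ \beta_v s_v^e&\beta_v i_h^e&-\gamma_v\end{pmatrix},\quad \sigma_e=\begin{pmatrix}\sqrt{\beta_h i_v^e s_h^e+\gamma_h i_h^e}&0&0&0\\0&\sqrt{\gamma_v(C_0+s_v^e)}&-\sqrt{\beta_v i_h^e s_v^e}&0\\0&0&\sqrt{\beta_v i_h^e s_v^e}&\sqrt{\gamma_v i_v^e}\end{pmatrix}.\] Let $\mathbf{B}$ be a 4-dimensional standard Brownian motion and $\Phi(0)$ a random vector in $\mathbb{R}^3$ with finite second moments, independent of $\mathbf{B}$, and let $\Phi(t)=(\hat I_h(t),\hat S_v(t),\hat I_v(t))$ solve $d\Phi(t)=C_e\Phi(t)\,dt+\sigma_e\,d\mathbf{B}(t)$. Then the variances of $\hat I_h(t)$, $\hat S_v(t)$ and $\hat I_v(t)$ tend to $\infty$ as $t\to\inf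ty$.
   Context: This is the diffusion limit of a stochastic vector-borne SIS model (random vector population size, Case I scaling, zero second-order parameter corrections) linearized at the endemic equilibrium $(i_h^e,i_v^e)$ of the fluid limit $i_h'=\beta_h i_v(1-i_h)-\gamma_h i_h$, $i_v'=\beta_v i_h(C_0-i_v)-\gamma_v i_v$. *)

theory Defs
  imports "HOL-Probability.Probability"
begin

definition ih_e :: "real \<Rightarrow> real \<Rightarrow> real \<Rightarrow> real \<Rightarrow> real \<Rightarrow> real" where
  "ih_e C0 bh gh bv gv = (C0*bh*bv - gh*gv) / (C0*bh*bv + bv*gh)"

definition iv_e :: "real \<Rightarrow> real \<Rightarrow> real \<Rightarrow> real \<Rightarrow> real \<Rightarrow> real" where
  "iv_e C0 bh gh bv gv = (C0*bh*bv - gh*gv) / (bh*bv + bh*gv)"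

definition sh_e :: "real \<Rightarrow> real \<Rightarrow> real \<Rightarrow> real \<Rightarrow> real \<Rightarrow> real" where
  "sh_e C0 bh gh bv gv = 1 - ih_e C0 bh gh bv gv"

definition sv_e :: "real \<Rightarrow> real \<Rightarrow> real \<Rightarrow> real \<Rightarrow> real \<Rightarrow> real" where
  "sv_e C0 bh gh bv gv = C0 - iv_e C0 bh gh bv gv"

definition R0 :: "real \<Rightarrow> real \<Rightarrow> real \<Rightarrow> real \<Rightarrow> real \<Rightarrow> real" where
  "R0 C0 bh gh bv gv = sqrt ((bh / gv) * (C0 * bv / gh))"

definition C_e :: "real \<Rightarrow> real \<Rightarrow> real \<Rightarrow> real \<Rightarrow> real \<Rightarrow> real^3^3" where
  "C_e C0 bh gh bv gv =
     (let ih = ih_e C0 bh gh bv gv; iv = iv_e C0 bh gh bv gv;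
          sh = sh_e C0 bh gh bv gv; sv = sv_e C0 bh gh bv gv in
      vector [vector [-(gh + bh*iv), 0, bh * sh],
              vector [-(bv * sv), -(bv*ih), gv],
              vector [bv * sv, bv*ih, -gv]])"

definition sigma_e :: "real \<Rightarrow> real \<Rightarrow> real \<Rightarrow> real \<Rightarrow> real \<Rightarrow> real^4^3" where
  "sigma_e C0 bh gh bv gv =
     (let ih = ih_e C0 bh gh bv gv; iv = iv_e C0 bh gh bv gv;
          sh = sh_e C0 bh gh bv gv; sv = sv_e C0 bh gh bv gv in
      vector [vector [sqrt (bh*iv * sh + gh*ih), 0, 0, 0],
              vector [0, sqrt (gv*(C0 + sv)), - sqrt (bv*ih * sv), 0],
              vector [0, 0, sqrt (bv*ih * sv), sqrt (gv*iv)]])"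

definition std_BM1 :: "'a measure \<Rightarrow> (real \<Rightarrow> 'a \<Rightarrow> real) \<Rightarrow> bool" where
  "std_BM1 M W \<longleftrightarrow>
     prob_space M \<and>
     (\<forall>t\<ge>0. W t \<in> borel_measurable M) \<and>
     (\<forall>\<omega>\<in>space M. W 0 \<omega> = 0) \<and>
     (\<forall>\<omega>\<in>space M. continuous_on {0..} (\<lambda>t. W t \<omega>)) \<and>
     (\<forall>s t. 0 \<le> s \<and> s < t \<longrightarrow>
        distributed M lborel (\<lambda>\<omega>. W t \<omega> - W s \<omega>) (\<lambda>x. ennreal (normal_density 0 (sqrt (t - s)) x))) \<and>
     (\<forall>(u :: nat \<Rightarrow> real) n. 0 \<le> u 0 \<and> strict_mono u \<longrightarrow>
        prob_space.indep_vars M (\<lambda>_. borel) (\<lambda>i \<omega>. W (u (Suc i)) \<omega> - W (u i) \<omega>) {..<n})"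

definition std_BM :: "'a measure \<Rightarrow> (real \<Rightarrow> 'a \<Rightarrow> real^'d) \<Rightarrow> bool" where
  "std_BM M B \<longleftrightarrow>
     (\<forall>k. std_BM1 M (\<lambda>t \<omega>. B t \<omega> $ k)) \<and>
     prob_space.indep_vars M (\<lambda>_. PiM {0..} (\<lambda>_. (borel :: real measure)))
        (\<lambda>k \<omega>. restrict (\<lambda>t. B t \<omega> $ k) {0..}) UNIV"

end

theory Submission
  imports Defs "HOL-Library.Quadratic_Discriminant"
begin

(* Drift C_e has the left null vector u0 = (0,1,1): the drift conserves the total vector
   population S_v + I_v.  Its other two eigenvalues are real and negative, with left eigenvectors
   u1, u2.  Along u0 the process is a Brownian motion, u0.Phi(t) = u0.Phi(0) + w.B(t) with
   w = u0 sigma_e <> 0, so its variance grows like |w|^2 t; along u1 and u2 it is of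
   Ornstein-Uhlenbeck type and its second moment stays bounded.  Each coordinate of Phi is a
   combination of the three projections in which the u0-coefficient is nonzero, because the right
   null vector of C_e has no zero entry; hence every coordinate variance tends to infinity. *)

section \<open>Brownian motion\<close>

lemma std_BM1_increment_moments:
  assumes W: "std_BM1 M W" and st: "0 \<le> s" "s \<le> t"
  shows "integrable M (\<lambda>\<omega>. W t \<omega> - W s \<omega>)"
    and "prob_space.expectation M (\<lambda>\<omega>. W t \<omega> - W s \<omega>) = 0"
    and "integrable M (\<lambda>\<omega>. (W t \<omega> - W s \<omega>)\<^sup>2)"
    and "prob_space.expectation M (\<lambda>\<omega>. (W t \<omega> - W s \<omega>)\<^sup>2) = t - s"
proof -
  interpret prob_space M using W by (simp add: std_BM1_def)
  have "integrable M (\<lambda>\<omega>. W t \<omega> - W s \<omega>) \<and> expectation (\<lambda>\<omega>. W t \<omega> - W s \<omega>) = 0 \<and>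
        integrable M (\<lambda>\<omega>. (W t \<omega> - W s \<omega>)\<^sup>2) \<and> expectation (\<lambda>\<omega>. (W t \<omega> - W s \<omega>)\<^sup>2) = t - s"
  proof (cases "s = t")
    case False
    then have lt: "s < t" using st by simp
    have D: "distributed M lborel (\<lambda>\<omega>. W t \<omega> - W s \<omega>) (\<lambda>x. ennreal (normal_density 0 (sqrt (t - s)) x))"
      using W st lt by (simp add: std_BM1_def)
    have sd: "0 < sqrt (t - s)" using lt by simp
    have "integrable lborel (\<lambda>x. normal_density 0 (sqrt (t - s)) x * x ^ k)" for k
      using integrable_normal_moment[OF sd, of 0 k] by simp
    from this[of 1] this[of 2] show ?thesis
      using distributed_integrable[OF D, of "\<lambda>x. x"] distributed_integrable[OF D, of "\<lambda>x. x\<^sup>2"]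
        normal_distributed_expectation[OF sd D]
        distributed_integral[OF D, of "\<lambda>x. x\<^sup>2"] integral_normal_moment_even[OF sd, of 0 1] lt
      by (simp add: eval_nat_numeral)
  qed simp
  then show "integrable M (\<lambda>\<omega>. W t \<omega> - W s \<omega>)"
    "expectation (\<lambda>\<omega>. W t \<omega> - W s \<omega>) = 0"
    "integrable M (\<lambda>\<omega>. (W t \<omega> - W s \<omega>)\<^sup>2)"
    "expectation (\<lambda>\<omega>. (W t \<omega> - W s \<omega>)\<^sup>2) = t - s" by auto
qed

lemma std_BM_coordinate: "std_BM M B \<Longrightarrow> std_BM1 M (\<lambda>t \<omega>. B t \<omega> $ j)"
  by (simp add: std_BM_def)

lemma std_BM_prob_space: "std_BM M B \<Longrightarrow> prob_space M"
  using std_BM_coordinate by (fastforce simp: std_BM1_def)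

lemma std_BM_increments_indep:
  assumes B: "std_BM M B" and st: "0 \<le> s" "s \<le> t"
  shows "prob_space.indep_vars M (\<lambda>_. borel) (\<lambda>j \<omega>. B t \<omega> $ j - B s \<omega> $ j) UNIV"
proof -
  interpret prob_space M using B by (rule std_BM_prob_space)
  have ind: "indep_vars (\<lambda>_. PiM {0..} (\<lambda>_. borel)) (\<lambda>j \<omega>. restrict (\<lambda>r. B r \<omega> $ j) {0..}) UNIV"
    using B by (simp add: std_BM_def)
  have "(\<lambda>f. f t - f s) \<in> borel_measurable (PiM {0..} (\<lambda>_. borel :: real measure))"
    using st by (intro borel_measurable_diff measurable_component_singleton) auto
  from indep_vars_compose2[OF ind this]
  have "indep_vars (\<lambda>_. borel) (\<lambda>j \<omega>. (\<lambda>f. f t - f s) (restrict (\<lambda>r. B r \<omega> $ j) {0..})) UNIV" .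
  then show ?thesis using st by simp
qed

lemma std_BM_inner_measurable:
  assumes B: "std_BM M B" and t: "0 \<le> t"
  shows "(\<lambda>\<omega>. w \<bullet> B t \<omega>) \<in> borel_measurable M"
proof -
  have [measurable]: "(\<lambda>\<omega>. B t \<omega> $ j) \<in> borel_measurable M" for j
    using std_BM_coordinate[OF B, of j] t by (simp add: std_BM1_def)
  show ?thesis unfolding inner_vec_def by measurable
qed

lemma std_BM_inner_continuous:
  assumes B: "std_BM M B" and \<omega>: "\<omega> \<in> space M"
  shows "continuous_on {0..} (\<lambda>t. w \<bullet> B t \<omega>)"
proof -
  have "continuous_on {0..} (\<lambda>t. B t \<omega> $ j)" for j
    using std_BM_coordinate[OF B, of j] \<omega> by (simp add: std_BM1_def)
  then show ?thesis unfolding inner_vec_def inner_real_def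
    by (intro continuous_on_sum continuous_on_mult_left)
qed

lemma std_BM_inner_start: "std_BM M B \<Longrightarrow> \<omega> \<in> space M \<Longrightarrow> w \<bullet> B 0 \<omega> = 0"
  using std_BM_coordinate[of M B] unfolding inner_vec_def std_BM1_def by simp

lemma std_BM_inner_increment_moments:
  fixes B :: "real \<Rightarrow> 'a \<Rightarrow> real^'d" and w :: "real^'d"
  assumes B: "std_BM M B" and st: "0 \<le> s" "s \<le> t"
  shows "integrable M (\<lambda>\<omega>. w \<bullet> B t \<omega> - w \<bullet> B s \<omega>)"
    and "prob_space.expectation M (\<lambda>\<omega>. w \<bullet> B t \<omega> - w \<bullet> B s \<omega>) = 0"
    and "integrable M (\<lambda>\<omega>. (w \<bullet> B t \<omega> - w \<bullet> B s \<omega>)\<^sup>2)"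
    and "prob_space.expectation M (\<lambda>\<omega>. (w \<bullet> B t \<omega> - w \<bullet> B s \<omega>)\<^sup>2) = (w \<bullet> w) * (t - s)"
proof -
  interpret prob_space M using B by (rule std_BM_prob_space)
  define D where "D j \<omega> = B t \<omega> $ j - B s \<omega> $ j" for j \<omega>
  note incr = std_BM1_increment_moments[OF std_BM_coordinate[OF B] st, folded D_def]
  have indep: "indep_vars (\<lambda>_. borel) D UNIV"
    unfolding D_def[abs_def] by (rule std_BM_increments_indep[OF B st])
  \<comment> \<open>The cross terms vanish by independence of the coordinates.\<close>
  have cov: "integrable M (\<lambda>\<omega>. D i \<omega> * D j \<omega>) \<and>
      expectation (\<lambda>\<omega>. D i \<omega> * D j \<omega>) = (if i = j then t - s else 0)" for i j
  proof (cases "i = j")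
    case True
    then show ?thesis using incr(3,4)[of j] by (simp add: power2_eq_square)
  next
    case False
    have "indep_vars (\<lambda>_. borel) D {i, j}" by (rule indep_vars_subset[OF indep]) simp
    then show ?thesis
      using indep_vars_lebesgue_integral[of "{i, j}" D] indep_vars_integrable[of "{i, j}" D] incr(1,2) False
      by auto
  qed
  have sum: "w \<bullet> B t \<omega> - w \<bullet> B s \<omega> = (\<Sum>j\<in>UNIV. w $ j * D j \<omega>)" for \<omega>
    by (simp add: D_def inner_vec_def sum_subtractf[symmetric] right_diff_distrib)
  have square: "(w \<bullet> B t \<omega> - w \<bullet> B s \<omega>)\<^sup>2 = (\<Sum>i\<in>UNIV. \<Sum>j\<in>UNIV. (w $ i * w $ j) * (D i \<omega> * D j \<omega>))" for \<omega>
    unfolding sum power2_eq_square sum_product by (simp add: ac_simps)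
  show "integrable M (\<lambda>\<omega>. w \<bullet> B t \<omega> - w \<bullet> B s \<omega>)"
    "expectation (\<lambda>\<omega>. w \<bullet> B t \<omega> - w \<bullet> B s \<omega>) = 0"
    unfolding sum using incr(1,2) by simp_all
  show "integrable M (\<lambda>\<omega>. (w \<bullet> B t \<omega> - w \<bullet> B s \<omega>)\<^sup>2)"
    unfolding square using cov by simp
  have "expectation (\<lambda>\<omega>. (w \<bullet> B t \<omega> - w \<bullet> B s \<omega>)\<^sup>2)
      = (\<Sum>i\<in>UNIV. \<Sum>j\<in>UNIV. (w $ i * w $ j) * (if i = j then t - s else 0))"
    unfolding square using cov by (simp add: Bochner_Integration.integral_sum)
  also have "\<dots> = (w \<bullet> w) * (t - s)"
    by (simp add: inner_vec_def sum_distrib_right power2_eq_square if_distrib cong: if_cong)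
  finally show "expectation (\<lambda>\<omega>. (w \<bullet> B t \<omega> - w \<bullet> B s \<omega>)\<^sup>2) = (w \<bullet> w) * (t - s)" .
qed

lemma std_BM_inner_moments:
  fixes B :: "real \<Rightarrow> 'a \<Rightarrow> real^'d" and w :: "real^'d"
  assumes B: "std_BM M B" and t: "0 \<le> t"
  shows "integrable M (\<lambda>\<omega>. w \<bullet> B t \<omega>)" and "prob_space.expectation M (\<lambda>\<omega>. w \<bullet> B t \<omega>) = 0"
    and "integrable M (\<lambda>\<omega>. (w \<bullet> B t \<omega>)\<^sup>2)"
    and "prob_space.expectation M (\<lambda>\<omega>. (w \<bullet> B t \<omega>)\<^sup>2) = (w \<bullet> w) * t"
proof -
  have start: "w \<bullet> B t \<omega> - w \<bullet> B 0 \<omega> = w \<bullet> B t \<omega>" if "\<omega> \<in> space M" for \<omega>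
    using std_BM_inner_start[OF B that] by simp
  have start_sq: "(w \<bullet> B t \<omega> - w \<bullet> B 0 \<omega>)\<^sup>2 = (w \<bullet> B t \<omega>)\<^sup>2" if "\<omega> \<in> space M" for \<omega>
    using start[OF that] by simp
  note incr = std_BM_inner_increment_moments[OF B order_refl t, of w]
  show "integrable M (\<lambda>\<omega>. w \<bullet> B t \<omega>)" "integrable M (\<lambda>\<omega>. (w \<bullet> B t \<omega>)\<^sup>2)"
    using incr(1,3) by (simp_all add: Bochner_Integration.integrable_cong[OF refl start]
        Bochner_Integration.integrable_cong[OF refl start_sq])
  show "prob_space.expectation M (\<lambda>\<omega>. w \<bullet> B t \<omega>) = 0"
    "prob_space.expectation M (\<lambda>\<omega>. (w \<bullet> B t \<omega>)\<^sup>2) = (w \<bullet> w) * t"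
    using incr(2,4) by (simp_all add: Bochner_Integration.integral_cong[OF refl start]
        Bochner_Integration.integral_cong[OF refl start_sq])
qed

lemma has_integral_exp_decay:
  fixes l t :: real
  assumes "0 \<le> t"
  shows "((\<lambda>s. l * exp (l * (t - s))) has_integral (exp (l * t) - 1)) {0..t}"
proof -
  have "((\<lambda>s. l * exp (l * (t - s))) has_integral (- exp (l * (t - t))) - (- exp (l * (t - 0)))) {0..t}"
  proof (rule fundamental_theorem_of_calculus[OF assms])
    fix s assume "s \<in> {0..t}"
    show "((\<lambda>s. - exp (l * (t - s))) has_vector_derivative l * exp (l * (t - s))) (at s within {0..t})"
      unfolding has_real_derivative_iff_has_vector_derivative[symmetric]
      by (auto intro!: derivative_eq_intros)
  qed
  then show ?thesis by simp
qed

lemma integral_exp_decay_le: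
  fixes l t :: real
  assumes l: "l < 0" and t: "0 \<le> t"
  shows "integral {0..t} (\<lambda>s. exp (l * (t - s))) \<le> 1 / (- l)"
proof -
  have "l * integral {0..t} (\<lambda>s. exp (l * (t - s))) = exp (l * t) - 1"
    using integral_unique[OF has_integral_exp_decay[OF t, of l]] by simp
  then have "-1 \<le> l * integral {0..t} (\<lambda>s. exp (l * (t - s)))"
    using exp_gt_zero[of "l * t"] by linarith
  then show ?thesis using l by (simp add: field_simps)
qed

lemma integral_exp_decay_mult_le:
  fixes l t :: real
  assumes l: "l < 0" and t: "0 \<le> t"
  shows "integral {0..t} (\<lambda>s. exp (l * (t - s)) * (t - s)) \<le> 1 / l\<^sup>2"
proof -
  define G where "G s = exp (l * (t - s)) * (1 / l\<^sup>2 - (t - s) / l)" for s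
  have "((\<lambda>s. exp (l * (t - s)) * (t - s)) has_integral (G t - G 0)) {0..t}"
  proof (rule fundamental_theorem_of_calculus[OF t])
    fix s assume "s \<in> {0..t}"
    have "(G has_real_derivative exp (l * (t - s)) * (t - s)) (at s within {0..t})"
      unfolding G_def using l
      by (auto intro!: derivative_eq_intros simp: power2_eq_square field_simps)
    then show "(G has_vector_derivative exp (l * (t - s)) * (t - s)) (at s within {0..t})"
      by (simp add: has_real_derivative_iff_has_vector_derivative)
  qed
  moreover have "t / l \<le> 1 / l\<^sup>2"
    using divide_nonneg_neg[OF t l] by (smt (verit) zero_le_divide_1_iff zero_le_power2)
  then have "0 \<le> G 0" unfolding G_def by simp
  moreover have "G t = 1 / l\<^sup>2" by (simp add: G_def)
  ultimately show ?thesis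
    by (simp add: integral_unique)
qed

lemma mult_exp_decay_le:
  fixes l t :: real
  assumes l: "l < 0" and t: "0 \<le> t"
  shows "t * exp (l * t) \<le> 1 / (- l)"
proof -
  have "(- l * t) * exp (l * t) \<le> exp (- l * t) * exp (l * t)"
    using exp_ge_add_one_self[of "- l * t"] by (intro mult_right_mono) auto
  also have "\<dots> = 1" by (simp add: mult_exp_exp)
  finally show ?thesis using l by (simp add: field_simps)
qed

lemma nonneg_quadratic_imp_discriminant_le:
  fixes a b w :: real
  assumes nonneg: "\<And>c. 0 \<le> b - 2 * c * a + c\<^sup>2 * w" and w: "0 \<le> w"
  shows "a\<^sup>2 \<le> w * b"
proof (cases "w = 0")
  case False
  have "0 \<le> b - 2 * (a / w) * a + (a / w)\<^sup>2 * w" by (rule nonneg)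
  also have "\<dots> = b - a\<^sup>2 / w" using False by (simp add: power2_eq_square field_simps)
  finally show ?thesis using False w by (simp add: field_simps)
next
  case True
  have "0 \<le> b - 2 * ((b + 1) / (2 * a)) * a + ((b + 1) / (2 * a))\<^sup>2 * w" by (rule nonneg)
  then show ?thesis using True by (cases "a = 0") (simp_all add: field_simps)
qed

lemma integral_weighted_Cauchy_Schwarz:
  fixes w g :: "real \<Rightarrow> real"
  assumes cw: "continuous_on {a..b} w" and cg: "continuous_on {a..b} g"
    and w: "\<And>s. s \<in> {a..b} \<Longrightarrow> 0 \<le> w s"
  shows "(integral {a..b} (\<lambda>s. w s * g s))\<^sup>2 \<le> integral {a..b} w * integral {a..b} (\<lambda>s. w s * (g s)\<^sup>2)"
proof (rule nonneg_quadratic_imp_discriminant_le)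
  show "0 \<le> integral {a..b} w"
    using w by (intro integral_nonneg integrable_continuous_interval cw) auto
next
  fix c :: real
  have int: "(\<lambda>s. w s * (g s)\<^sup>2) integrable_on {a..b}" "(\<lambda>s. w s * g s) integrable_on {a..b}"
    "w integrable_on {a..b}"
    by (intro integrable_continuous_interval continuous_intros cw cg)+
  have "0 \<le> integral {a..b} (\<lambda>s. w s * (g s - c)\<^sup>2)"
    using w by (intro integral_nonneg integrable_continuous_interval continuous_intros cw cg) auto
  also have "\<dots> = integral {a..b} (\<lambda>s. w s * (g s)\<^sup>2 - (2 * c) * (w s * g s) + c\<^sup>2 * w s)"
    by (rule integral_cong) (simp add: power2_eq_square algebra_simps)
  also have "\<dots> = integral {a..b} (\<lambda>s. w s * (g s)\<^sup>2) - 2 * c * integral {a..b} (\<lambda>s. w s * g s)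
      + c\<^sup>2 * integral {a..b} w"
    using int by (simp add: integral_add integral_diff integrable_on_mult_right integrable_diff)
  finally show "0 \<le> integral {a..b} (\<lambda>s. w s * (g s)\<^sup>2) - 2 * c * integral {a..b} (\<lambda>s. w s * g s)
      + c\<^sup>2 * integral {a..b} w" .
qed

lemma convolution_square_le:
  fixes b :: "real \<Rightarrow> real"
  assumes l: "l < 0" and t: "0 \<le> t" and cont: "continuous_on {0..t} b"
  shows "(integral {0..t} (\<lambda>s. exp (l * (t - s)) * (b s - b t)))\<^sup>2
    \<le> integral {0..t} (\<lambda>s. exp (l * (t - s)) * (b s - b t)\<^sup>2) / (- l)"
proof -
  have "(integral {0..t} (\<lambda>s. exp (l * (t - s)) * (b s - b t)))\<^sup>2
      \<le> integral {0..t} (\<lambda>s. exp (l * (t - s))) * integral {0..t} (\<lambda>s. exp (l * (t - s)) * (b s - b t)\<^sup>2)"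
    using cont by (intro integral_weighted_Cauchy_Schwarz continuous_intros) auto
  also have "\<dots> \<le> (1 / (- l)) * integral {0..t} (\<lambda>s. exp (l * (t - s)) * (b s - b t)\<^sup>2)"
    using cont by (intro mult_right_mono integral_exp_decay_le l t integral_nonneg
        integrable_continuous_interval continuous_intros) auto
  finally show ?thesis by simp
qed

lemma linear_integral_equation_variation_of_constants:
  fixes x b :: "real \<Rightarrow> real" and l t :: real
  assumes cx: "continuous_on {0..} x" and cb: "continuous_on {0..} b"
    and eq: "\<And>u. 0 \<le> u \<Longrightarrow> x u = x 0 + l * integral {0..u} x + b u"
    and t: "0 \<le> t"
  shows "x t = exp (l * t) * x 0 + b t + l * exp (l * t) * integral {0..t} (\<lambda>s. exp (- l * s) * b s)"
proof -
  define I where "I u = integral {0..u} x" for u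
  define J where "J u = integral {0..u} (\<lambda>s. exp (- l * s) * b s)" for u
  have cxt: "continuous_on {0..t} x" and cbt: "continuous_on {0..t} b"
    using cx cb by (auto elim: continuous_on_subset)
  have cjt: "continuous_on {0..t} (\<lambda>s. exp (- l * s) * b s)"
    by (intro continuous_intros cbt)
  have "\<exists>c. \<forall>u\<in>{0..t}. exp (- l * u) * (x 0 + l * I u) - l * J u = c"
  proof (rule has_field_derivative_zero_constant)
    fix u assume u: "u \<in> {0..t}"
    have "(I has_field_derivative x u) (at u within {0..t})"
      "(J has_field_derivative (exp (- l * u) * b u)) (at u within {0..t})"
      unfolding I_def J_def has_real_derivative_iff_has_vector_derivative
      by (rule integral_has_vector_derivative[OF cxt u] integral_has_vector_derivative[OF cjt u])+
    then have "((\<lambda>u. exp (- l * u) * (x 0 + l * I u) - l * J u) has_field_derivative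
        (- l * exp (- l * u) * (x 0 + l * I u) + exp (- l * u) * (l * x u) - l * (exp (- l * u) * b u)))
        (at u within {0..t})"
      by (auto intro!: derivative_eq_intros)
    moreover have "x u = x 0 + l * I u + b u" using eq[of u] u by (simp add: I_def)
    ultimately show "((\<lambda>u. exp (- l * u) * (x 0 + l * I u) - l * J u) has_field_derivative 0)
        (at u within {0..t})"
      by (simp add: algebra_simps)
  qed simp
  then have "exp (- l * t) * (x 0 + l * I t) - l * J t = x 0"
    using t by (force simp: I_def J_def)
  then have "x 0 + l * I t = exp (l * t) * (x 0 + l * J t)"
    by (simp add: exp_minus field_simps)
  then show ?thesis
    using eq[OF t] by (simp add: I_def J_def algebra_simps)
qed

text \<open>The convolution of \<open>exp (l * (t - s))\<close> against \<open>db(s)\<close> integrated by parts, so that only the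
  path of \<open>b\<close> enters and no derivative of it is needed.\<close>
lemma linear_integral_equation_solution:
  fixes x b :: "real \<Rightarrow> real" and l t :: real
  assumes cx: "continuous_on {0..} x" and cb: "continuous_on {0..} b"
    and eq: "\<And>u. 0 \<le> u \<Longrightarrow> x u = x 0 + l * integral {0..u} x + b u"
    and t: "0 \<le> t"
  shows "x t = exp (l * t) * (x 0 + b t) + l * integral {0..t} (\<lambda>s. exp (l * (t - s)) * (b s - b t))"
proof -
  define J where "J = integral {0..t} (\<lambda>s. exp (- l * s) * b s)"
  have int: "(\<lambda>s. exp (- l * s) * b s) integrable_on {0..t}" "(\<lambda>s. exp (l * (t - s))) integrable_on {0..t}"
    using cb by (auto intro!: integrable_continuous_interval continuous_intros elim: continuous_on_subset)
  have "integral {0..t} (\<lambda>s. exp (l * (t - s)) * (b s - b t))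
      = integral {0..t} (\<lambda>s. exp (l * t) * (exp (- l * s) * b s) - b t * exp (l * (t - s)))"
    by (rule integral_cong) (simp add: exp_diff exp_minus field_simps)
  also have "\<dots> = exp (l * t) * J - b t * integral {0..t} (\<lambda>s. exp (l * (t - s)))"
    using integral_diff[OF int[THEN integrable_on_mult_right]] by (simp add: J_def)
  finally have convolution: "integral {0..t} (\<lambda>s. exp (l * (t - s)) * (b s - b t))
      = exp (l * t) * J - b t * integral {0..t} (\<lambda>s. exp (l * (t - s)))" .
  have x_t: "x t = exp (l * t) * x 0 + b t + l * exp (l * t) * J"
    unfolding J_def by (rule linear_integral_equation_variation_of_constants[OF cx cb eq t])
  have "l * integral {0..t} (\<lambda>s. exp (l * (t - s))) = exp (l * t) - 1"
    using integral_unique[OF has_integral_exp_decay[OF t, of l]] by simp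
  then show ?thesis unfolding x_t convolution by algebra
qed

section \<open>Pathwise integrals of continuous processes\<close>

lemma floor_mult_divide_LIMSEQ:
  fixes s :: real
  shows "(\<lambda>n. of_int \<lfloor>(real n + 1) * s\<rfloor> / (real n + 1)) \<longlonglongrightarrow> s"
proof (rule tendsto_sandwich[where f="\<lambda>n. s - 1 / (real n + 1)" and h="\<lambda>n. s"])
  have "(\<lambda>n. 1 / (real n + 1)) \<longlonglongrightarrow> 0"
    using LIMSEQ_inverse_real_of_nat by (simp add: inverse_eq_divide add.commute)
  then show "(\<lambda>n. s - 1 / (real n + 1)) \<longlonglongrightarrow> s"
    using tendsto_diff[OF tendsto_const, of _ 0 sequentially s] by simp
  have "s - 1 / (real n + 1) \<le> of_int \<lfloor>(real n + 1) * s\<rfloor> / (real n + 1) \<and>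
      of_int \<lfloor>(real n + 1) * s\<rfloor> / (real n + 1) \<le> s" for n
  proof -
    have pos: "0 < real n + 1" by simp
    have "(real n + 1) * s - 1 \<le> of_int \<lfloor>(real n + 1) * s\<rfloor>"
      "of_int \<lfloor>(real n + 1) * s\<rfloor> \<le> (real n + 1) * s"
      by linarith+
    then show ?thesis
      using pos by (simp add: pos_le_divide_eq pos_divide_le_eq right_diff_distrib mult.commute)
  qed
  then show "\<forall>\<^sub>F n in sequentially. s - 1 / (real n + 1) \<le> of_int \<lfloor>(real n + 1) * s\<rfloor> / (real n + 1)"
    "\<forall>\<^sub>F n in sequentially. of_int \<lfloor>(real n + 1) * s\<rfloor> / (real n + 1) \<le> s"
    by (simp_all add: always_eventually)
qed simp

lemma borel_measurable_continuous_process: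
  fixes X :: "real \<Rightarrow> 'a \<Rightarrow> real"
  assumes meas: "\<And>t. 0 \<le> t \<Longrightarrow> X t \<in> borel_measurable M"
    and cont: "\<And>\<omega>. \<omega> \<in> space M \<Longrightarrow> continuous_on {0..} (\<lambda>t. X t \<omega>)"
  shows "(\<lambda>p. X (max 0 (snd p)) (fst p)) \<in> borel_measurable (M \<Otimes>\<^sub>M lborel)"
proof (rule borel_measurable_LIMSEQ_real)
  define grid where "grid n s = max 0 (of_int \<lfloor>(real n + 1) * s\<rfloor> / (real n + 1))" for n :: nat and s :: real
  show "(\<lambda>n. X (grid n (snd p)) (fst p)) \<longlonglongrightarrow> X (max 0 (snd p)) (fst p)"
    if "p \<in> space (M \<Otimes>\<^sub>M lborel)" for p
  proof (rule continuous_on_tendsto_compose[OF cont])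
    show "fst p \<in> space M" using that by (auto simp: space_pair_measure)
    show "(\<lambda>n. grid n (snd p)) \<longlonglongrightarrow> max 0 (snd p)"
      unfolding grid_def by (intro tendsto_max tendsto_const floor_mult_divide_LIMSEQ)
  qed (auto simp: grid_def)
  show "(\<lambda>p. X (grid n (snd p)) (fst p)) \<in> borel_measurable (M \<Otimes>\<^sub>M lborel)" for n
  proof -
    have "(\<lambda>p. X (max 0 (of_int i / (real n + 1))) (fst p)) \<in> borel_measurable (M \<Otimes>\<^sub>M lborel)" for i :: int
      using meas by (intro measurable_compose[OF measurable_fst]) auto
    moreover have "(\<lambda>p. \<lfloor>(real n + 1) * snd p\<rfloor>) \<in> measurable (M \<Otimes>\<^sub>M lborel) (count_space UNIV)"
      by measurable
    ultimately show ?thesis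
      unfolding grid_def by (rule measurable_compose_countable'[where I=UNIV]) simp
  qed
qed

lemma integral_eq_lborel_integral:
  fixes f :: "real \<Rightarrow> real"
  assumes "continuous_on {a..b} f"
  shows "integral {a..b} f = (\<integral>s. indicator {a..b} s * f s \<partial>lborel)"
proof -
  have "set_integrable lborel {a..b} f"
    using borel_integrable_compact[OF compact_Icc assms] by (simp add: set_integrable_def)
  from set_borel_integral_eq_integral(2)[OF this] show ?thesis
    by (simp add: set_lebesgue_integral_def)
qed

lemma borel_measurable_integral_process:
  fixes F :: "real \<Rightarrow> 'a \<Rightarrow> real"
  assumes F: "(\<lambda>p. F (snd p) (fst p)) \<in> borel_measurable (M \<Otimes>\<^sub>M lborel)"
    and cont: "\<And>\<omega>. \<omega> \<in> space M \<Longrightarrow> continuous_on {a..b} (\<lambda>s. F s \<omega>)"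
  shows "(\<lambda>\<omega>. integral {a..b} (\<lambda>s. F s \<omega>)) \<in> borel_measurable M"
proof -
  have "(\<lambda>\<omega>. \<integral>s. indicator {a..b} s * F s \<omega> \<partial>lborel) \<in> borel_measurable M"
    using F by (intro lborel.borel_measurable_lebesgue_integral) (simp add: case_prod_beta')
  then show ?thesis
    by (rule measurable_cong[THEN iffD1, rotated]) (simp add: integral_eq_lborel_integral cont)
qed

lemma nn_integral_integral_process_le:
  fixes G :: "real \<Rightarrow> 'a \<Rightarrow> real" and g :: "real \<Rightarrow> real"
  assumes M: "prob_space M"
    and G: "(\<lambda>p. G (snd p) (fst p)) \<in> borel_measurable (M \<Otimes>\<^sub>M lborel)"
    and cont: "\<And>\<omega>. \<omega> \<in> space M \<Longrightarrow> continuous_on {a..b} (\<lambda>s. G s \<omega>)"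
    and nonneg: "\<And>s \<omega>. s \<in> {a..b} \<Longrightarrow> 0 \<le> G s \<omega>"
    and moment: "\<And>s. s \<in> {a..b} \<Longrightarrow> integrable M (G s) \<and> (\<integral>\<omega>. G s \<omega> \<partial>M) \<le> g s"
    and g: "continuous_on {a..b} g" "\<And>s. s \<in> {a..b} \<Longrightarrow> 0 \<le> g s"
  shows "(\<integral>\<^sup>+\<omega>. ennreal (integral {a..b} (\<lambda>s. G s \<omega>)) \<partial>M) \<le> ennreal (integral {a..b} g)"
proof -
  interpret prob_space M by (rule M)
  interpret pair_sigma_finite M lborel
    by (intro pair_sigma_finite.intro sigma_finite_measure_axioms lborel.sigma_finite_measure_axioms)
  define H where "H \<omega> s = ennreal (indicator {a..b} s * G s \<omega>)" for \<omega> s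
  have path: "ennreal (integral {a..b} (\<lambda>s. G s \<omega>)) = (\<integral>\<^sup>+s. H \<omega> s \<partial>lborel)" if "\<omega> \<in> space M" for \<omega>
    unfolding H_def using nonneg
    by (intro nn_integral_has_integral_lebesgue[symmetric] integrable_integral
        integrable_continuous_interval cont that) auto
  have marginal: "(\<integral>\<^sup>+\<omega>. H \<omega> s \<partial>M) \<le> ennreal (indicator {a..b} s * g s)" for s
  proof (cases "s \<in> {a..b}")
    case True
    have "(\<integral>\<^sup>+\<omega>. H \<omega> s \<partial>M) = (\<integral>\<^sup>+\<omega>. ennreal (G s \<omega>) \<partial>M)"
      using True by (simp add: H_def)
    also have "\<dots> = ennreal (\<integral>\<omega>. G s \<omega> \<partial>M)"
      using moment[OF True] nonneg[OF True] by (intro nn_integral_eq_integral) auto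
    finally show ?thesis using True moment[OF True] by (simp add: ennreal_leI)
  qed (simp add: H_def)
  have "(\<integral>\<^sup>+\<omega>. ennreal (integral {a..b} (\<lambda>s. G s \<omega>)) \<partial>M) = (\<integral>\<^sup>+\<omega>. (\<integral>\<^sup>+s. H \<omega> s \<partial>lborel) \<partial>M)"
    by (intro nn_integral_cong) (simp add: path)
  also have "\<dots> = (\<integral>\<^sup>+s. (\<integral>\<^sup>+\<omega>. H \<omega> s \<partial>M) \<partial>lborel)"
    using G unfolding H_def by (intro Fubini'[symmetric]) (simp add: case_prod_beta')
  also have "\<dots> \<le> (\<integral>\<^sup>+s. ennreal (indicator {a..b} s * g s) \<partial>lborel)"
    by (intro nn_integral_mono marginal)
  also have "\<dots> = ennreal (integral {a..b} g)"
    using g by (intro nn_integral_has_integral_lebesgue integrable_integral integrable_continuous_interval)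
  finally show ?thesis .
qed

lemma integral_process_expectation_le:
  fixes G :: "real \<Rightarrow> 'a \<Rightarrow> real" and g :: "real \<Rightarrow> real"
  assumes M: "prob_space M"
    and G: "(\<lambda>p. G (snd p) (fst p)) \<in> borel_measurable (M \<Otimes>\<^sub>M lborel)"
    and cont: "\<And>\<omega>. \<omega> \<in> space M \<Longrightarrow> continuous_on {a..b} (\<lambda>s. G s \<omega>)"
    and nonneg: "\<And>s \<omega>. s \<in> {a..b} \<Longrightarrow> 0 \<le> G s \<omega>"
    and moment: "\<And>s. s \<in> {a..b} \<Longrightarrow> integrable M (G s) \<and> (\<integral>\<omega>. G s \<omega> \<partial>M) \<le> g s"
    and cont_g: "continuous_on {a..b} g"
  shows "integrable M (\<lambda>\<omega>. integral {a..b} (\<lambda>s. G s \<omega>))"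
    and "(\<integral>\<omega>. integral {a..b} (\<lambda>s. G s \<omega>) \<partial>M) \<le> integral {a..b} g"
proof -
  have g_nonneg: "0 \<le> g s" if "s \<in> {a..b}" for s
  proof -
    have "0 \<le> (\<integral>\<omega>. G s \<omega> \<partial>M)" by (rule Bochner_Integration.integral_nonneg) (rule nonneg[OF that])
    then show ?thesis using moment[OF that] by linarith
  qed
  note bound = nn_integral_integral_process_le[OF M G cont nonneg moment cont_g g_nonneg]
  have path_nonneg: "0 \<le> integral {a..b} (\<lambda>s. G s \<omega>)" if "\<omega> \<in> space M" for \<omega>
    using nonneg by (intro integral_nonneg integrable_continuous_interval cont that) auto
  show int: "integrable M (\<lambda>\<omega>. integral {a..b} (\<lambda>s. G s \<omega>))"
    using borel_measurable_integral_process[OF G cont] path_nonneg bound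
    by (intro integrableI_nonneg) (auto simp: top.not_eq_extremum intro: le_less_trans)
  have "ennreal (\<integral>\<omega>. integral {a..b} (\<lambda>s. G s \<omega>) \<partial>M) \<le> ennreal (integral {a..b} g)"
    using bound nn_integral_eq_integral[OF int] path_nonneg by simp
  moreover have "0 \<le> integral {a..b} g"
    using g_nonneg by (intro integral_nonneg integrable_continuous_interval cont_g) auto
  ultimately show "(\<integral>\<omega>. integral {a..b} (\<lambda>s. G s \<omega>) \<partial>M) \<le> integral {a..b} g"
    by simp
qed

section \<open>Processes with bounded second moment\<close>

definition bounded_second_moment :: "'a measure \<Rightarrow> (real \<Rightarrow> 'a \<Rightarrow> real) \<Rightarrow> bool" where
  "bounded_second_moment M X \<longleftrightarrow> (\<exists>K. \<forall>t\<ge>0. X t \<in> borel_measurable M \<and>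
     integrable M (\<lambda>\<omega>. (X t \<omega>)\<^sup>2) \<and> (\<integral>\<omega>. (X t \<omega>)\<^sup>2 \<partial>M) \<le> K)"

lemma bounded_second_momentI:
  assumes "\<And>t. 0 \<le> t \<Longrightarrow> X t \<in> borel_measurable M \<and> integrable M (\<lambda>\<omega>. (X t \<omega>)\<^sup>2) \<and>
      (\<integral>\<omega>. (X t \<omega>)\<^sup>2 \<partial>M) \<le> K"
  shows "bounded_second_moment M X"
  using assms unfolding bounded_second_moment_def by blast

lemma bounded_second_moment_cong:
  assumes "bounded_second_moment M Y" and "\<And>t \<omega>. 0 \<le> t \<Longrightarrow> \<omega> \<in> space M \<Longrightarrow> X t \<omega> = Y t \<omega>"
  shows "bounded_second_moment M X"
proof -
  obtain K where K: "\<And>t. 0 \<le> t \<Longrightarrow> Y t \<in> borel_measurable M \<and> integrable M (\<lambda>\<omega>. (Y t \<omega>)\<^sup>2) \<and>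
      (\<integral>\<omega>. (Y t \<omega>)\<^sup>2 \<partial>M) \<le> K"
    using assms(1) unfolding bounded_second_moment_def by blast
  show ?thesis
  proof (rule bounded_second_momentI)
    fix t :: real assume t: "0 \<le> t"
    have "X t \<in> borel_measurable M \<longleftrightarrow> Y t \<in> borel_measurable M"
      by (rule measurable_cong) (rule assms(2)[OF t])
    moreover have "integrable M (\<lambda>\<omega>. (X t \<omega>)\<^sup>2) = integrable M (\<lambda>\<omega>. (Y t \<omega>)\<^sup>2)"
      using assms(2)[OF t] by (intro Bochner_Integration.integrable_cong) auto
    moreover have "(\<integral>\<omega>. (X t \<omega>)\<^sup>2 \<partial>M) = (\<integral>\<omega>. (Y t \<omega>)\<^sup>2 \<partial>M)"
      using assms(2)[OF t] by (intro Bochner_Integration.integral_cong) auto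
    ultimately show "X t \<in> borel_measurable M \<and> integrable M (\<lambda>\<omega>. (X t \<omega>)\<^sup>2) \<and>
        (\<integral>\<omega>. (X t \<omega>)\<^sup>2 \<partial>M) \<le> K"
      using K[OF t] by simp
  qed
qed

lemma bounded_second_moment_add:
  assumes "bounded_second_moment M X" and "bounded_second_moment M Y"
  shows "bounded_second_moment M (\<lambda>t \<omega>. X t \<omega> + Y t \<omega>)"
proof -
  obtain K L where
    K: "\<And>t. 0 \<le> t \<Longrightarrow> X t \<in> borel_measurable M \<and> integrable M (\<lambda>\<omega>. (X t \<omega>)\<^sup>2) \<and>
      (\<integral>\<omega>. (X t \<omega>)\<^sup>2 \<partial>M) \<le> K" and
    L: "\<And>t. 0 \<le> t \<Longrightarrow> Y t \<in> borel_measurable M \<and> integrable M (\<lambda>\<omega>. (Y t \<omega>)\<^sup>2) \<and>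
      (\<integral>\<omega>. (Y t \<omega>)\<^sup>2 \<partial>M) \<le> L"
    using assms unfolding bounded_second_moment_def by meson
  show ?thesis
  proof (rule bounded_second_momentI)
    fix t :: real assume t: "0 \<le> t"
    have le: "(X t \<omega> + Y t \<omega>)\<^sup>2 \<le> 2 * (X t \<omega>)\<^sup>2 + 2 * (Y t \<omega>)\<^sup>2" for \<omega>
      using sum_squares_bound[of "X t \<omega>" "Y t \<omega>"] by (simp add: power2_sum)
    have meas: "(\<lambda>\<omega>. X t \<omega> + Y t \<omega>) \<in> borel_measurable M"
      using K[OF t] L[OF t] by (auto intro!: borel_measurable_add)
    have int: "integrable M (\<lambda>\<omega>. 2 * (X t \<omega>)\<^sup>2 + 2 * (Y t \<omega>)\<^sup>2)" using K[OF t] L[OF t] by simp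
    have "norm ((X t \<omega> + Y t \<omega>)\<^sup>2) \<le> norm (2 * (X t \<omega>)\<^sup>2 + 2 * (Y t \<omega>)\<^sup>2)" for \<omega>
      using le[of \<omega>] by simp
    then have int_sum: "integrable M (\<lambda>\<omega>. (X t \<omega> + Y t \<omega>)\<^sup>2)"
      by (intro Bochner_Integration.integrable_bound[OF int borel_measurable_power[OF meas]] AE_I2)
    have "(\<integral>\<omega>. (X t \<omega> + Y t \<omega>)\<^sup>2 \<partial>M) \<le> (\<integral>\<omega>. 2 * (X t \<omega>)\<^sup>2 + 2 * (Y t \<omega>)\<^sup>2 \<partial>M)"
      by (intro integral_mono int_sum int le)
    also have "\<dots> \<le> 2 * K + 2 * L" using K[OF t] L[OF t] by simp
    finally show "(\<lambda>\<omega>. X t \<omega> + Y t \<omega>) \<in> borel_measurable M \<and>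
        integrable M (\<lambda>\<omega>. (X t \<omega> + Y t \<omega>)\<^sup>2) \<and> (\<integral>\<omega>. (X t \<omega> + Y t \<omega>)\<^sup>2 \<partial>M) \<le> 2 * K + 2 * L"
      using meas int_sum by simp
  qed
qed

lemma bounded_second_moment_mult:
  assumes X: "bounded_second_moment M X" and f: "\<And>t. 0 \<le> t \<Longrightarrow> \<bar>f t\<bar> \<le> C"
  shows "bounded_second_moment M (\<lambda>t \<omega>. f t * X t \<omega>)"
proof -
  obtain K where K: "\<And>t. 0 \<le> t \<Longrightarrow> X t \<in> borel_measurable M \<and> integrable M (\<lambda>\<omega>. (X t \<omega>)\<^sup>2) \<and>
      (\<integral>\<omega>. (X t \<omega>)\<^sup>2 \<partial>M) \<le> K"
    using X unfolding bounded_second_moment_def by blast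
  show ?thesis
  proof (rule bounded_second_momentI)
    fix t :: real assume t: "0 \<le> t"
    have "(f t)\<^sup>2 \<le> C\<^sup>2" using f[OF t] abs_le_square_iff by fastforce
    moreover have "0 \<le> (\<integral>\<omega>. (X t \<omega>)\<^sup>2 \<partial>M)" by simp
    ultimately have "(f t)\<^sup>2 * (\<integral>\<omega>. (X t \<omega>)\<^sup>2 \<partial>M) \<le> C\<^sup>2 * K"
      using K[OF t] by (intro mult_mono) auto
    then show "(\<lambda>\<omega>. f t * X t \<omega>) \<in> borel_measurable M \<and> integrable M (\<lambda>\<omega>. (f t * X t \<omega>)\<^sup>2) \<and>
        (\<integral>\<omega>. (f t * X t \<omega>)\<^sup>2 \<partial>M) \<le> C\<^sup>2 * K"
      using K[OF t] by (auto intro!: borel_measurable_times simp: power_mult_distrib)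
  qed
qed

lemma bounded_second_moment_cmult:
  "bounded_second_moment M X \<Longrightarrow> bounded_second_moment M (\<lambda>t \<omega>. c * X t \<omega>)"
  by (rule bounded_second_moment_mult[where C="\<bar>c\<bar>"]) simp_all

lemma bounded_second_moment_const:
  "Y \<in> borel_measurable M \<Longrightarrow> integrable M (\<lambda>\<omega>. (Y \<omega>)\<^sup>2) \<Longrightarrow> bounded_second_moment M (\<lambda>t. Y)"
  by (rule bounded_second_momentI) auto

lemma weighted_increment_integral_expectation_le:
  fixes b :: "real \<Rightarrow> 'a \<Rightarrow> real"
  assumes M: "prob_space M" and l: "l < 0" and c: "0 \<le> c" and t: "0 \<le> t"
    and meas: "\<And>s. 0 \<le> s \<Longrightarrow> b s \<in> borel_measurable M"
    and cont: "\<And>\<omega>. \<omega> \<in> space M \<Longrightarrow> continuous_on {0..} (\<lambda>s. b s \<omega>)"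
    and incr: "\<And>s. 0 \<le> s \<Longrightarrow> s \<le> t \<Longrightarrow> integrable M (\<lambda>\<omega>. (b t \<omega> - b s \<omega>)\<^sup>2) \<and>
        (\<integral>\<omega>. (b t \<omega> - b s \<omega>)\<^sup>2 \<partial>M) \<le> c * (t - s)"
  defines "G \<equiv> \<lambda>\<omega>. integral {0..t} (\<lambda>s. exp (l * (t - s)) * (b s \<omega> - b t \<omega>)\<^sup>2)"
  shows "integrable M G" and "(\<integral>\<omega>. G \<omega> \<partial>M) \<le> c / l\<^sup>2"
proof -
  have [measurable]: "(\<lambda>p. b (max 0 (snd p)) (fst p)) \<in> borel_measurable (M \<Otimes>\<^sub>M lborel)"
    by (rule borel_measurable_continuous_process[OF meas cont])
  have [measurable]: "b t \<in> borel_measurable M" using meas t by simp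
  have cont_clamp: "continuous_on {0..t} (\<lambda>s. b (max 0 s) \<omega>)" if "\<omega> \<in> space M" for \<omega>
    using cont[OF that] by (rule continuous_on_subset[THEN continuous_on_eq]) auto
  have clamp: "integral {0..t} (\<lambda>s. exp (l * (t - s)) * (b (max 0 s) \<omega> - b t \<omega>)\<^sup>2) = G \<omega>" for \<omega>
    unfolding G_def by (auto intro: integral_cong)
  note tonelli = integral_process_expectation_le[OF M,
      of "\<lambda>s \<omega>. exp (l * (t - s)) * (b (max 0 s) \<omega> - b t \<omega>)\<^sup>2" 0 t "\<lambda>s. exp (l * (t - s)) * (c * (t - s))",
      unfolded clamp]
  show "integrable M G"
    using incr by (intro tonelli(1) cont_clamp continuous_intros) (auto simp: power2_commute)
  have "(\<integral>\<omega>. G \<omega> \<partial>M) \<le> integral {0..t} (\<lambda>s. exp (l * (t - s)) * (c * (t - s)))"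
    using incr by (intro tonelli(2) cont_clamp continuous_intros) (auto simp: power2_commute)
  also have "\<dots> = c * integral {0..t} (\<lambda>s. exp (l * (t - s)) * (t - s))"
    by (simp add: mult.left_commute)
  also have "\<dots> \<le> c * (1 / l\<^sup>2)"
    by (intro mult_left_mono integral_exp_decay_mult_le l t c)
  finally show "(\<integral>\<omega>. G \<omega> \<partial>M) \<le> c / l\<^sup>2" by simp
qed

lemma convolution_second_moment_le:
  fixes b :: "real \<Rightarrow> 'a \<Rightarrow> real"
  assumes M: "prob_space M" and l: "l < 0" and c: "0 \<le> c" and t: "0 \<le> t"
    and meas: "\<And>s. 0 \<le> s \<Longrightarrow> b s \<in> borel_measurable M"
    and cont: "\<And>\<omega>. \<omega> \<in> space M \<Longrightarrow> continuous_on {0..} (\<lambda>s. b s \<omega>)"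
    and incr: "\<And>s. 0 \<le> s \<Longrightarrow> s \<le> t \<Longrightarrow> integrable M (\<lambda>\<omega>. (b t \<omega> - b s \<omega>)\<^sup>2) \<and>
        (\<integral>\<omega>. (b t \<omega> - b s \<omega>)\<^sup>2 \<partial>M) \<le> c * (t - s)"
  defines "J \<equiv> \<lambda>\<omega>. integral {0..t} (\<lambda>s. exp (l * (t - s)) * (b s \<omega> - b t \<omega>))"
  shows "J \<in> borel_measurable M" and "integrable M (\<lambda>\<omega>. (J \<omega>)\<^sup>2)"
    and "(\<integral>\<omega>. (J \<omega>)\<^sup>2 \<partial>M) \<le> c / (- l) ^ 3"
proof -
  define G where "G \<omega> = integral {0..t} (\<lambda>s. exp (l * (t - s)) * (b s \<omega> - b t \<omega>)\<^sup>2)" for \<omega>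
  note G = weighted_increment_integral_expectation_le[OF M l c t meas cont incr, folded G_def]
  have [measurable]: "(\<lambda>p. b (max 0 (snd p)) (fst p)) \<in> borel_measurable (M \<Otimes>\<^sub>M lborel)"
    by (rule borel_measurable_continuous_process[OF meas cont])
  have [measurable]: "b t \<in> borel_measurable M" using meas t by simp
  have cont_t: "continuous_on {0..t} (\<lambda>s. b s \<omega>)" if "\<omega> \<in> space M" for \<omega>
    using cont[OF that] by (rule continuous_on_subset) auto
  have cont_clamp: "continuous_on {0..t} (\<lambda>s. b (max 0 s) \<omega>)" if "\<omega> \<in> space M" for \<omega>
    using cont_t[OF that] by (rule continuous_on_eq) auto
  have "(\<lambda>\<omega>. integral {0..t} (\<lambda>s. exp (l * (t - s)) * (b (max 0 s) \<omega> - b t \<omega>))) \<in> borel_measurable M"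
    by (intro borel_measurable_integral_process continuous_intros cont_clamp) measurable
  moreover have "integral {0..t} (\<lambda>s. exp (l * (t - s)) * (b (max 0 s) \<omega> - b t \<omega>)) = J \<omega>" for \<omega>
    unfolding J_def by (auto intro: integral_cong)
  ultimately show J_meas: "J \<in> borel_measurable M" by simp
  have pathwise: "(J \<omega>)\<^sup>2 \<le> G \<omega> / (- l)" if "\<omega> \<in> space M" for \<omega>
    unfolding J_def G_def by (rule convolution_square_le[OF l t cont_t[OF that]])
  have pathwise_norm: "norm ((J \<omega>)\<^sup>2) \<le> norm (G \<omega> / (- l))" if "\<omega> \<in> space M" for \<omega>
    using pathwise[OF that] abs_ge_self[of "G \<omega> / (- l)"] by simp
  show J_int: "integrable M (\<lambda>\<omega>. (J \<omega>)\<^sup>2)"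
  proof (rule Bochner_Integration.integrable_bound)
    show "integrable M (\<lambda>\<omega>. G \<omega> / (- l))" using G(1) by simp
    show "(\<lambda>\<omega>. (J \<omega>)\<^sup>2) \<in> borel_measurable M" by (rule borel_measurable_power[OF J_meas])
    show "AE \<omega> in M. norm ((J \<omega>)\<^sup>2) \<le> norm (G \<omega> / (- l))" by (rule AE_I2) (rule pathwise_norm)
  qed
  have "(\<integral>\<omega>. (J \<omega>)\<^sup>2 \<partial>M) \<le> (\<integral>\<omega>. G \<omega> / (- l) \<partial>M)"
    using G(1) by (intro integral_mono[OF J_int _ pathwise]) simp_all
  also have "\<dots> = (\<integral>\<omega>. G \<omega> \<partial>M) / (- l)" by simp
  also have "\<dots> \<le> c / l\<^sup>2 / (- l)" using G(2) l by (intro divide_right_mono) auto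
  also have "\<dots> = c / (- l) ^ 3" by (simp add: power2_eq_square power3_eq_cube)
  finally show "(\<integral>\<omega>. (J \<omega>)\<^sup>2 \<partial>M) \<le> c / (- l) ^ 3" .
qed

lemma bounded_second_moment_exp_decay:
  fixes b :: "real \<Rightarrow> 'a \<Rightarrow> real"
  assumes l: "l < 0" and c: "0 \<le> c"
    and b: "\<And>t. 0 \<le> t \<Longrightarrow> b t \<in> borel_measurable M \<and> integrable M (\<lambda>\<omega>. (b t \<omega>)\<^sup>2) \<and>
        (\<integral>\<omega>. (b t \<omega>)\<^sup>2 \<partial>M) \<le> c * t"
  shows "bounded_second_moment M (\<lambda>t \<omega>. exp (l * t) * b t \<omega>)"
proof (rule bounded_second_momentI)
  fix t :: real assume t: "0 \<le> t"
  have "exp (l * t) \<le> 1" using l t by (simp add: mult_nonpos_nonneg)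
  then have "(exp (l * t))\<^sup>2 * (\<integral>\<omega>. (b t \<omega>)\<^sup>2 \<partial>M) \<le> exp (l * t) * (c * t)"
    using b[OF t] by (intro mult_mono) (auto simp: power2_eq_square)
  also have "\<dots> = c * (t * exp (l * t))" by simp
  also have "\<dots> \<le> c * (1 / (- l))" by (intro mult_left_mono mult_exp_decay_le l t c)
  finally show "(\<lambda>\<omega>. exp (l * t) * b t \<omega>) \<in> borel_measurable M \<and>
      integrable M (\<lambda>\<omega>. (exp (l * t) * b t \<omega>)\<^sup>2) \<and>
      (\<integral>\<omega>. (exp (l * t) * b t \<omega>)\<^sup>2 \<partial>M) \<le> c * (1 / (- l))"
    using b[OF t] by (auto simp: power_mult_distrib)
qed

lemma stable_linear_equation_bounded_second_moment:
  fixes x b :: "real \<Rightarrow> 'a \<Rightarrow> real"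
  assumes M: "prob_space M" and l: "l < 0" and c: "0 \<le> c"
    and b_meas: "\<And>t. 0 \<le> t \<Longrightarrow> b t \<in> borel_measurable M"
    and b_cont: "\<And>\<omega>. \<omega> \<in> space M \<Longrightarrow> continuous_on {0..} (\<lambda>t. b t \<omega>)"
    and b_incr: "\<And>s t. 0 \<le> s \<Longrightarrow> s \<le> t \<Longrightarrow> integrable M (\<lambda>\<omega>. (b t \<omega> - b s \<omega>)\<^sup>2) \<and>
        (\<integral>\<omega>. (b t \<omega> - b s \<omega>)\<^sup>2 \<partial>M) \<le> c * (t - s)"
    and x0_meas: "x 0 \<in> borel_measurable M" and x0_L2: "integrable M (\<lambda>\<omega>. (x 0 \<omega>)\<^sup>2)"
    and x_cont: "\<And>\<omega>. \<omega> \<in> space M \<Longrightarrow> continuous_on {0..} (\<lambda>t. x t \<omega>)"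
    and x_eq: "\<And>\<omega> t. \<omega> \<in> space M \<Longrightarrow> 0 \<le> t \<Longrightarrow>
        x t \<omega> = x 0 \<omega> + l * integral {0..t} (\<lambda>s. x s \<omega>) + b t \<omega>"
  shows "bounded_second_moment M x"
proof -
  interpret prob_space M by (rule M)
  define J where "J t \<omega> = integral {0..t} (\<lambda>s. exp (l * (t - s)) * (b s \<omega> - b t \<omega>))" for t \<omega>
  have decay: "\<bar>exp (l * t)\<bar> \<le> 1" if "0 \<le> t" for t
    using l that by (simp add: mult_nonpos_nonneg)
  have initial: "bounded_second_moment M (\<lambda>t \<omega>. exp (l * t) * x 0 \<omega>)"
    by (rule bounded_second_moment_mult[OF bounded_second_moment_const[OF x0_meas x0_L2] decay])
  have noise: "bounded_second_moment M (\<lambda>t \<omega>. exp (l * t) * b t \<omega>)"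
  proof (rule bounded_second_moment_exp_decay[OF l c])
    fix t :: real assume t: "0 \<le> t"
    have b0: "(b t \<omega> - b 0 \<omega>)\<^sup>2 = (b t \<omega>)\<^sup>2" if "\<omega> \<in> space M" for \<omega>
      using x_eq[OF that order_refl] by simp
    have "integrable M (\<lambda>\<omega>. (b t \<omega> - b 0 \<omega>)\<^sup>2) = integrable M (\<lambda>\<omega>. (b t \<omega>)\<^sup>2)"
      "(\<integral>\<omega>. (b t \<omega> - b 0 \<omega>)\<^sup>2 \<partial>M) = (\<integral>\<omega>. (b t \<omega>)\<^sup>2 \<partial>M)"
      by (rule Bochner_Integration.integrable_cong Bochner_Integration.integral_cong; simp add: b0)+
    then show "b t \<in> borel_measurable M \<and> integrable M (\<lambda>\<omega>. (b t \<omega>)\<^sup>2) \<and> (\<integral>\<omega>. (b t \<omega>)\<^sup>2 \<partial>M) \<le> c * t"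
      using b_meas[OF t] b_incr[OF order_refl t] by simp
  qed
  have convolution: "bounded_second_moment M (\<lambda>t \<omega>. l * J t \<omega>)"
  proof (rule bounded_second_moment_mult[where C="\<bar>l\<bar>"])
    show "bounded_second_moment M J"
    proof (rule bounded_second_momentI)
      fix t :: real assume t: "0 \<le> t"
      from convolution_second_moment_le[OF M l c t b_meas b_cont b_incr]
      show "J t \<in> borel_measurable M \<and> integrable M (\<lambda>\<omega>. (J t \<omega>)\<^sup>2) \<and>
          (\<integral>\<omega>. (J t \<omega>)\<^sup>2 \<partial>M) \<le> c / (- l) ^ 3"
        unfolding J_def by blast
    qed
  qed simp
  show ?thesis
  proof (rule bounded_second_moment_cong)
    show "bounded_second_moment M (\<lambda>t \<omega>. exp (l * t) * x 0 \<omega> + exp (l * t) * b t \<omega> + l * J t \<omega>)"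
      by (intro bounded_second_moment_add initial noise convolution)
    fix t :: real and \<omega> assume t: "0 \<le> t" and \<omega>: "\<omega> \<in> space M"
    have "x t \<omega> = exp (l * t) * (x 0 \<omega> + b t \<omega>) + l * J t \<omega>"
      unfolding J_def by (rule linear_integral_equation_solution[OF x_cont[OF \<omega>] b_cont[OF \<omega>] x_eq[OF \<omega>] t])
    then show "x t \<omega> = exp (l * t) * x 0 \<omega> + exp (l * t) * b t \<omega> + l * J t \<omega>"
      by (simp add: distrib_left)
  qed
qed

lemma (in prob_space) variance_add_ge:
  fixes W R :: "'a \<Rightarrow> real"
  assumes [measurable]: "W \<in> borel_measurable M" "R \<in> borel_measurable M"
    and W2: "integrable M (\<lambda>\<omega>. (W \<omega>)\<^sup>2)" and R2: "integrable M (\<lambda>\<omega>. (R \<omega>)\<^sup>2)"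
    and centred: "expectation W = 0"
  shows "expectation (\<lambda>\<omega>. (W \<omega>)\<^sup>2) / 2 - 2 * expectation (\<lambda>\<omega>. (R \<omega>)\<^sup>2) \<le> variance (\<lambda>\<omega>. W \<omega> + R \<omega>)"
proof -
  have W1: "integrable M W" and R1: "integrable M R"
    using W2 R2 by (auto intro: square_integrable_imp_integrable)
  have upper: "(W \<omega> + R \<omega>)\<^sup>2 \<le> 2 * (W \<omega>)\<^sup>2 + 2 * (R \<omega>)\<^sup>2"
    and lower: "(W \<omega>)\<^sup>2 / 2 - (R \<omega>)\<^sup>2 \<le> (W \<omega> + R \<omega>)\<^sup>2" for \<omega>
    using sum_squares_bound[of "W \<omega>" "R \<omega>"] zero_le_power2[of "W \<omega> + 2 * R \<omega>"]
    by (simp_all add: power2_sum power2_eq_square field_simps)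
  have sum2: "integrable M (\<lambda>\<omega>. (W \<omega> + R \<omega>)\<^sup>2)"
  proof (rule Bochner_Integration.integrable_bound)
    show "integrable M (\<lambda>\<omega>. 2 * (W \<omega>)\<^sup>2 + 2 * (R \<omega>)\<^sup>2)" using W2 R2 by simp
    show "(\<lambda>\<omega>. (W \<omega> + R \<omega>)\<^sup>2) \<in> borel_measurable M" by measurable
    show "AE \<omega> in M. norm ((W \<omega> + R \<omega>)\<^sup>2) \<le> norm (2 * (W \<omega>)\<^sup>2 + 2 * (R \<omega>)\<^sup>2)"
      using upper by (intro AE_I2) simp
  qed
  have "variance (\<lambda>\<omega>. W \<omega> + R \<omega>) = expectation (\<lambda>\<omega>. (W \<omega> + R \<omega>)\<^sup>2) - (expectation R)\<^sup>2"
    using variance_eq[of "\<lambda>\<omega>. W \<omega> + R \<omega>"] W1 R1 sum2 centred by simp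
  moreover have "expectation (\<lambda>\<omega>. (W \<omega>)\<^sup>2) / 2 - expectation (\<lambda>\<omega>. (R \<omega>)\<^sup>2)
      \<le> expectation (\<lambda>\<omega>. (W \<omega> + R \<omega>)\<^sup>2)"
    using integral_mono[OF _ sum2 lower] W2 R2 by simp
  moreover have "0 \<le> variance R" by simp
  then have "(expectation R)\<^sup>2 \<le> expectation (\<lambda>\<omega>. (R \<omega>)\<^sup>2)"
    using variance_eq[OF R1 R2] by simp
  ultimately show ?thesis by linarith
qed

lemma variance_diffusive_tendsto_at_top:
  fixes X W R :: "real \<Rightarrow> 'a \<Rightarrow> real"
  assumes M: "prob_space M" and \<kappa>: "0 < \<kappa>"
    and W: "\<And>t. 0 \<le> t \<Longrightarrow> W t \<in> borel_measurable M \<and> integrable M (\<lambda>\<omega>. (W t \<omega>)\<^sup>2) \<and>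
        (\<integral>\<omega>. W t \<omega> \<partial>M) = 0 \<and> \<kappa> * t \<le> (\<integral>\<omega>. (W t \<omega>)\<^sup>2 \<partial>M)"
    and R: "bounded_second_moment M R"
    and X: "\<And>t \<omega>. 0 \<le> t \<Longrightarrow> \<omega> \<in> space M \<Longrightarrow> X t \<omega> = W t \<omega> + R t \<omega>"
  shows "filterlim (\<lambda>t. prob_space.variance M (X t)) at_top at_top"
proof -
  interpret prob_space M by (rule M)
  obtain K where K: "\<And>t. 0 \<le> t \<Longrightarrow> R t \<in> borel_measurable M \<and> integrable M (\<lambda>\<omega>. (R t \<omega>)\<^sup>2) \<and>
      expectation (\<lambda>\<omega>. (R t \<omega>)\<^sup>2) \<le> K"
    using R unfolding bounded_second_moment_def by blast
  have lower: "- (2 * K) + \<kappa> / 2 * t \<le> variance (X t)" if t: "0 \<le> t" for t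
  proof -
    have "expectation (X t) = expectation (\<lambda>\<omega>. W t \<omega> + R t \<omega>)"
      using X[OF t] by (intro Bochner_Integration.integral_cong) simp_all
    then have "variance (X t) = variance (\<lambda>\<omega>. W t \<omega> + R t \<omega>)"
      using X[OF t] by (intro Bochner_Integration.integral_cong) simp_all
    moreover have "expectation (\<lambda>\<omega>. (W t \<omega>)\<^sup>2) / 2 - 2 * expectation (\<lambda>\<omega>. (R t \<omega>)\<^sup>2)
        \<le> variance (\<lambda>\<omega>. W t \<omega> + R t \<omega>)"
      using W[OF t] K[OF t] by (intro variance_add_ge) auto
    moreover have "\<kappa> * t \<le> expectation (\<lambda>\<omega>. (W t \<omega>)\<^sup>2)" "expectation (\<lambda>\<omega>. (R t \<omega>)\<^sup>2) \<le> K"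
      using W[OF t] K[OF t] by auto
    moreover have "\<kappa> / 2 * t = \<kappa> * t / 2" by simp
    ultimately show ?thesis by linarith
  qed
  have "filterlim (\<lambda>t. \<kappa> / 2 * t) at_top at_top"
    using \<kappa> by (intro filterlim_tendsto_pos_mult_at_top[OF tendsto_const _ filterlim_ident]) simp
  then have "filterlim (\<lambda>t. - (2 * K) + \<kappa> / 2 * t) at_top at_top"
    by (rule filterlim_tendsto_add_at_top[OF tendsto_const])
  moreover have "\<forall>\<^sub>F t in at_top. - (2 * K) + \<kappa> / 2 * t \<le> variance (X t)"
    using eventually_ge_at_top[of 0] by (rule eventually_mono) (rule lower)
  ultimately show ?thesis by (rule filterlim_at_top_mono)
qed

section \<open>Linear stochastic differential equations\<close>

lemma square_integrable_inner:
  fixes X :: "'a \<Rightarrow> real^'n" and u :: "real^'n"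
  assumes meas: "X \<in> borel_measurable M" and L2: "\<forall>k. integrable M (\<lambda>\<omega>. (X \<omega> $ k)\<^sup>2)"
  shows "(\<lambda>\<omega>. u \<bullet> X \<omega>) \<in> borel_measurable M" and "integrable M (\<lambda>\<omega>. (u \<bullet> X \<omega>)\<^sup>2)"
proof -
  show inner_meas: "(\<lambda>\<omega>. u \<bullet> X \<omega>) \<in> borel_measurable M" using meas by measurable
  show "integrable M (\<lambda>\<omega>. (u \<bullet> X \<omega>)\<^sup>2)"
  proof (rule Bochner_Integration.integrable_bound)
    show "integrable M (\<lambda>\<omega>. (u \<bullet> u) * (X \<omega> \<bullet> X \<omega>))"
      using L2 by (simp add: inner_vec_def power2_eq_square)
    show "(\<lambda>\<omega>. (u \<bullet> X \<omega>)\<^sup>2) \<in> borel_measurable M" using inner_meas by measurable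
    show "AE \<omega> in M. norm ((u \<bullet> X \<omega>)\<^sup>2) \<le> norm ((u \<bullet> u) * (X \<omega> \<bullet> X \<omega>))"
      using Cauchy_Schwarz_ineq[of u] by (intro AE_I2) simp
  qed
qed

lemma linear_integral_equation_left_eigenvector:
  fixes phi :: "real \<Rightarrow> real^'n" and beta :: "real \<Rightarrow> real^'d"
    and C :: "real^'n^'n" and S :: "real^'d^'n"
  assumes cont: "continuous_on {0..} phi"
    and eq: "\<And>t. 0 \<le> t \<Longrightarrow> phi t = phi 0 + integral {0..t} (\<lambda>s. C *v phi s) + S *v beta t"
    and eig: "u v* C = l *\<^sub>R u" and t: "0 \<le> t"
  shows "u \<bullet> phi t = u \<bullet> phi 0 + l * integral {0..t} (\<lambda>s. u \<bullet> phi s) + (u v* S) \<bullet> beta t"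
proof -
  have drift: "u \<bullet> (C *v v) = l * (u \<bullet> v)" for v
    by (metis dot_lmul_matrix eig inner_scaleR_left)
  have "continuous_on {0..t} phi" using cont by (rule continuous_on_subset) auto
  then have "continuous_on {0..t} (\<lambda>s. C *v phi s)"
    by (rule continuous_on_compose2[OF matrix_vector_mult_linear_continuous_on]) auto
  then have "(\<lambda>s. C *v phi s) integrable_on {0..t}" by (rule integrable_continuous_interval)
  then have "u \<bullet> integral {0..t} (\<lambda>s. C *v phi s) = integral {0..t} (\<lambda>s. u \<bullet> (C *v phi s))"
    unfolding inner_commute[of u] by (rule integral_component_eq[symmetric])
  also have "\<dots> = l * integral {0..t} (\<lambda>s. u \<bullet> phi s)" by (simp add: drift)
  finally have "u \<bullet> integral {0..t} (\<lambda>s. C *v phi s) = l * integral {0..t} (\<lambda>s. u \<bullet> phi s)" .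
  moreover have "u \<bullet> (S *v beta t) = (u v* S) \<bullet> beta t" by (rule dot_lmul_matrix[symmetric])
  ultimately show ?thesis
    using eq[OF t] by (simp add: inner_add_right)
qed

lemma linear_sde_stable_direction:
  fixes B :: "real \<Rightarrow> 'a \<Rightarrow> real^'d" and Phi :: "real \<Rightarrow> 'a \<Rightarrow> real^'n"
    and C :: "real^'n^'n" and S :: "real^'d^'n"
  assumes B: "std_BM M B"
    and init_meas: "Phi 0 \<in> borel_measurable M" and init_L2: "\<forall>k. integrable M (\<lambda>\<omega>. (Phi 0 \<omega> $ k)\<^sup>2)"
    and cont: "\<forall>\<omega>\<in>space M. continuous_on {0..} (\<lambda>t. Phi t \<omega>)"
    and sde: "\<forall>\<omega>\<in>space M. \<forall>t\<ge>0. Phi t \<omega> = Phi 0 \<omega> + integral {0..t} (\<lambda>s. C *v Phi s \<omega>) + S *v B t \<omega>"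
    and eig: "u v* C = l *\<^sub>R u" and l: "l < 0"
  shows "bounded_second_moment M (\<lambda>t \<omega>. u \<bullet> Phi t \<omega>)"
proof (rule stable_linear_equation_bounded_second_moment[OF std_BM_prob_space[OF B] l])
  let ?w = "u v* S"
  show "0 \<le> ?w \<bullet> ?w" by simp
  show "(\<lambda>\<omega>. ?w \<bullet> B t \<omega>) \<in> borel_measurable M" if "0 \<le> t" for t
    using std_BM_inner_measurable[OF B that] .
  show "continuous_on {0..} (\<lambda>t. ?w \<bullet> B t \<omega>)" if "\<omega> \<in> space M" for \<omega>
    using std_BM_inner_continuous[OF B that] .
  show "integrable M (\<lambda>\<omega>. (?w \<bullet> B t \<omega> - ?w \<bullet> B s \<omega>)\<^sup>2) \<and>
      prob_space.expectation M (\<lambda>\<omega>. (?w \<bullet> B t \<omega> - ?w \<bullet> B s \<omega>)\<^sup>2) \<le> (?w \<bullet> ?w) * (t - s)"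
    if "0 \<le> s" "s \<le> t" for s t
    using std_BM_inner_increment_moments[OF B that] by simp
  show "(\<lambda>\<omega>. u \<bullet> Phi 0 \<omega>) \<in> borel_measurable M" "integrable M (\<lambda>\<omega>. (u \<bullet> Phi 0 \<omega>)\<^sup>2)"
    by (rule square_integrable_inner[OF init_meas init_L2])+
  show "continuous_on {0..} (\<lambda>t. u \<bullet> Phi t \<omega>)" if "\<omega> \<in> space M" for \<omega>
    using cont that by (intro continuous_on_inner continuous_on_const) blast
  show "u \<bullet> Phi t \<omega> = u \<bullet> Phi 0 \<omega> + l * integral {0..t} (\<lambda>s. u \<bullet> Phi s \<omega>) + ?w \<bullet> B t \<omega>"
    if \<omega>: "\<omega> \<in> space M" and t: "0 \<le> t" for \<omega> t
  proof (rule linear_integral_equation_left_eigenvector[OF _ _ eig t])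
    show "continuous_on {0..} (\<lambda>t. Phi t \<omega>)" using cont \<omega> by blast
    show "Phi r \<omega> = Phi 0 \<omega> + integral {0..r} (\<lambda>s. C *v Phi s \<omega>) + S *v B r \<omega>" if "0 \<le> r" for r
      using sde \<omega> that by blast
  qed
qed

lemma linear_sde_neutral_direction:
  fixes B :: "real \<Rightarrow> 'a \<Rightarrow> real^'d" and Phi :: "real \<Rightarrow> 'a \<Rightarrow> real^'n"
    and C :: "real^'n^'n" and S :: "real^'d^'n"
  assumes cont: "\<forall>\<omega>\<in>space M. continuous_on {0..} (\<lambda>t. Phi t \<omega>)"
    and sde: "\<forall>\<omega>\<in>space M. \<forall>t\<ge>0. Phi t \<omega> = Phi 0 \<omega> + integral {0..t} (\<lambda>s. C *v Phi s \<omega>) + S *v B t \<omega>"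
    and null: "u v* C = 0" and \<omega>: "\<omega> \<in> space M" and t: "0 \<le> t"
  shows "u \<bullet> Phi t \<omega> = u \<bullet> Phi 0 \<omega> + (u v* S) \<bullet> B t \<omega>"
proof -
  have "u \<bullet> Phi t \<omega> = u \<bullet> Phi 0 \<omega> + 0 * integral {0..t} (\<lambda>s. u \<bullet> Phi s \<omega>) + (u v* S) \<bullet> B t \<omega>"
  proof (rule linear_integral_equation_left_eigenvector[OF _ _ _ t])
    show "continuous_on {0..} (\<lambda>t. Phi t \<omega>)" using cont \<omega> by blast
    show "Phi r \<omega> = Phi 0 \<omega> + integral {0..r} (\<lambda>s. C *v Phi s \<omega>) + S *v B r \<omega>" if "0 \<le> r" for r
      using sde \<omega> that by blast
    show "u v* C = 0 *\<^sub>R u" using null by simp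
  qed
  then show ?thesis by simp
qed

lemma linear_sde_coordinate_variance_at_top:
  fixes B :: "real \<Rightarrow> 'a \<Rightarrow> real^'d" and Phi :: "real \<Rightarrow> 'a \<Rightarrow> real^'n"
    and C :: "real^'n^'n" and S :: "real^'d^'n"
  assumes B: "std_BM M B"
    and init_meas: "Phi 0 \<in> borel_measurable M" and init_L2: "\<forall>k. integrable M (\<lambda>\<omega>. (Phi 0 \<omega> $ k)\<^sup>2)"
    and cont: "\<forall>\<omega>\<in>space M. continuous_on {0..} (\<lambda>t. Phi t \<omega>)"
    and sde: "\<forall>\<omega>\<in>space M. \<forall>t\<ge>0. Phi t \<omega> = Phi 0 \<omega> + integral {0..t} (\<lambda>s. C *v Phi s \<omega>) + S *v B t \<omega>"
    and null: "u0 v* C = 0" and noise: "u0 v* S \<noteq> 0"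
    and eig1: "u1 v* C = \<mu>1 *\<^sub>R u1" "\<mu>1 < 0" and eig2: "u2 v* C = \<mu>2 *\<^sub>R u2" "\<mu>2 < 0"
    and a: "a \<noteq> 0" and coord: "\<And>v. v $ k = a * (u0 \<bullet> v) + c1 * (u1 \<bullet> v) + c2 * (u2 \<bullet> v)"
  shows "filterlim (\<lambda>t. prob_space.variance M (\<lambda>\<omega>. Phi t \<omega> $ k)) at_top at_top"
proof (rule variance_diffusive_tendsto_at_top[where X="\<lambda>t \<omega>. Phi t \<omega> $ k"])
  let ?w = "u0 v* S"
  show "prob_space M" by (rule std_BM_prob_space[OF B])
  show "0 < a\<^sup>2 * (?w \<bullet> ?w)" using a noise by simp
  show "(\<lambda>\<omega>. a * (?w \<bullet> B t \<omega>)) \<in> borel_measurable M \<and> integrable M (\<lambda>\<omega>. (a * (?w \<bullet> B t \<omega>))\<^sup>2) \<and>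
      (\<integral>\<omega>. a * (?w \<bullet> B t \<omega>) \<partial>M) = 0 \<and> a\<^sup>2 * (?w \<bullet> ?w) * t \<le> (\<integral>\<omega>. (a * (?w \<bullet> B t \<omega>))\<^sup>2 \<partial>M)"
    if "0 \<le> t" for t
    using std_BM_inner_measurable[OF B that] std_BM_inner_moments[OF B that, of ?w]
    by (simp add: power_mult_distrib)
  show "bounded_second_moment M (\<lambda>t \<omega>. a * (u0 \<bullet> Phi 0 \<omega>) + c1 * (u1 \<bullet> Phi t \<omega>) + c2 * (u2 \<bullet> Phi t \<omega>))"
    using square_integrable_inner[OF init_meas init_L2, of u0]
      linear_sde_stable_direction[OF B init_meas init_L2 cont sde eig1]
      linear_sde_stable_direction[OF B init_meas init_L2 cont sde eig2]
    by (intro bounded_second_moment_add bounded_second_moment_cmult bounded_second_moment_const)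
  show "Phi t \<omega> $ k = a * (?w \<bullet> B t \<omega>) + (a * (u0 \<bullet> Phi 0 \<omega>) + c1 * (u1 \<bullet> Phi t \<omega>) + c2 * (u2 \<bullet> Phi t \<omega>))"
    if "0 \<le> t" "\<omega> \<in> space M" for t \<omega>
    using coord[of "Phi t \<omega>"] linear_sde_neutral_direction[OF cont sde null that(2,1)]
    by (simp add: algebra_simps)
qed

section \<open>The linearised host-vector model\<close>

definition host_vector_matrix :: "real \<Rightarrow> real \<Rightarrow> real \<Rightarrow> real \<Rightarrow> real \<Rightarrow> real^3^3" where
  "host_vector_matrix \<alpha> \<beta> \<gamma> \<epsilon> g = vector [vector [-\<alpha>, 0, \<beta>], vector [-\<gamma>, -\<epsilon>, g], vector [\<gamma>, \<epsilon>, -g]]"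

lemma vector_matrix_mult_host_vector_matrix:
  "v v* host_vector_matrix \<alpha> \<beta> \<gamma> \<epsilon> g =
     vector [- \<alpha> * v$1 - \<gamma> * v$2 + \<gamma> * v$3, - \<epsilon> * v$2 + \<epsilon> * v$3, \<beta> * v$1 + g * v$2 - g * v$3]"
  by (simp add: vec_eq_iff forall_3 vector_matrix_mult_def host_vector_matrix_def sum_3)

lemma host_vector_matrix_mult_vector:
  "host_vector_matrix \<alpha> \<beta> \<gamma> \<epsilon> g *v r =
     vector [- \<alpha> * r$1 + \<beta> * r$3, - \<gamma> * r$1 - \<epsilon> * r$2 + g * r$3, \<gamma> * r$1 + \<epsilon> * r$2 - g * r$3]"
  by (simp add: vec_eq_iff forall_3 matrix_vector_mult_def host_vector_matrix_def sum_3)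

lemma host_vector_matrix_left_null: "vector [0, 1, 1] v* host_vector_matrix \<alpha> \<beta> \<gamma> \<epsilon> g = 0"
  by (simp add: vector_matrix_mult_host_vector_matrix vec_eq_iff forall_3)

lemma host_vector_matrix_right_null:
  "host_vector_matrix \<alpha> \<beta> \<gamma> \<epsilon> g *v vector [\<beta> * \<epsilon>, \<alpha> * g - \<beta> * \<gamma>, \<alpha> * \<epsilon>] = 0"
  by (simp add: host_vector_matrix_mult_vector vec_eq_iff forall_3 algebra_simps)

lemma host_vector_matrix_left_eigenvector:
  assumes \<mu>: "\<mu> \<noteq> 0" and char: "(\<mu> + \<alpha>) * (\<mu> + \<epsilon> + g) = \<beta> * \<gamma>"
    and k: "k = (\<mu> + \<alpha>) * \<epsilon> / \<mu>"
  shows "vector [\<gamma>, k, \<mu> + \<alpha> + k] v* host_vector_matrix \<alpha> \<beta> \<gamma> \<epsilon> g = \<mu> *\<^sub>R vector [\<gamma>, k, \<mu> + \<alpha> + k]"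
proof -
  have "\<mu> * k = (\<mu> + \<alpha>) * \<epsilon>" using \<mu> k by simp
  then show ?thesis
    using char by (simp add: vector_matrix_mult_host_vector_matrix vec_eq_iff forall_3 algebra_simps)
qed

lemma host_vector_matrix_eigenvalues:
  fixes \<alpha> \<beta> \<gamma> \<epsilon> g :: real
  assumes pos: "0 < \<alpha>" "0 < \<beta>" "0 < \<gamma>" "0 < \<epsilon>" "0 < g" and stable: "\<beta> * \<gamma> < \<alpha> * g"
  obtains \<mu>1 \<mu>2 where "\<mu>1 \<noteq> \<mu>2" "\<mu>1 < 0" "\<mu>2 < 0"
    "(\<mu>1 + \<alpha>) * (\<mu>1 + \<epsilon> + g) = \<beta> * \<gamma>" "(\<mu>2 + \<alpha>) * (\<mu>2 + \<epsilon> + g) = \<beta> * \<gamma>"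
proof -
  define b where "b = \<alpha> + \<epsilon> + g"
  define c where "c = \<alpha> * (\<epsilon> + g) - \<beta> * \<gamma>"
  have char: "(\<mu> + \<alpha>) * (\<mu> + \<epsilon> + g) = \<beta> * \<gamma> \<longleftrightarrow> 1 * \<mu>\<^sup>2 + b * \<mu> + c = 0" for \<mu>
    by (auto simp: b_def c_def power2_eq_square algebra_simps)
  have "0 < \<alpha> * \<epsilon>" using pos by simp
  then have "c > 0" unfolding c_def distrib_left using stable by linarith
  have "discrim 1 b c = (\<alpha> - (\<epsilon> + g))\<^sup>2 + 4 * (\<beta> * \<gamma>)"
    by (simp add: discrim_def b_def c_def power2_eq_square algebra_simps)
  also have "\<dots> > 0" using pos by (simp add: add_nonneg_pos)
  finally obtain \<mu>1 \<mu>2 where roots: "\<mu>1 \<noteq> \<mu>2" "1 * \<mu>1\<^sup>2 + b * \<mu>1 + c = 0" "1 * \<mu>2\<^sup>2 + b * \<mu>2 + c = 0"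
    using discriminant_pos_ex[of 1 b c] by auto
  have negative: "\<mu> < 0" if "1 * \<mu>\<^sup>2 + b * \<mu> + c = 0" for \<mu>
  proof (rule ccontr)
    assume "\<not> \<mu> < 0"
    then have "0 \<le> b * \<mu>" using pos by (simp add: b_def)
    then show False using that \<open>c > 0\<close> zero_le_power2[of \<mu>] by linarith
  qed
  from roots negative char show thesis
    by (intro that[of \<mu>1 \<mu>2]) blast+
qed

lemma left_eigenvector_orthogonal_right_null:
  fixes A :: "real^'n^'n"
  assumes "u v* A = \<mu> *\<^sub>R u" and "A *v r = 0" and "\<mu> \<noteq> 0"
  shows "u \<bullet> r = 0"
proof -
  have "\<mu> * (u \<bullet> r) = (u v* A) \<bullet> r" using assms(1) by simp
  also have "\<dots> = 0" using assms(2) by (simp add: dot_lmul_matrix)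
  finally show ?thesis using assms(3) by simp
qed

text \<open>The \<open>u\<^sub>0\<close>-coordinate of the \<open>k\<close>-th unit vector is read off by pairing with a vector \<open>r\<close>
  that annihilates \<open>u\<^sub>1\<close> and \<open>u\<^sub>2\<close>.\<close>
lemma coordinate_in_spanning_triple:
  fixes u0 u1 u2 r :: "real^'n"
  assumes span: "axis k 1 \<in> span {u0, u1, u2}"
    and r: "u1 \<bullet> r = 0" "u2 \<bullet> r = 0" "u0 \<bullet> r \<noteq> 0" "r $ k \<noteq> 0"
  shows "\<exists>a c1 c2. a \<noteq> 0 \<and> (\<forall>v. v $ k = a * (u0 \<bullet> v) + c1 * (u1 \<bullet> v) + c2 * (u2 \<bullet> v))"
proof -
  from span obtain a c1 c2 where "axis k 1 - a *\<^sub>R u0 - c1 *\<^sub>R u1 = c2 *\<^sub>R u2"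
    unfolding span_breakdown_eq span_singleton by blast
  then have e: "axis k 1 = c2 *\<^sub>R u2 + c1 *\<^sub>R u1 + a *\<^sub>R u0"
    by (simp add: diff_eq_eq)
  have coord: "v $ k = a * (u0 \<bullet> v) + c1 * (u1 \<bullet> v) + c2 * (u2 \<bullet> v)" for v
    using inner_axis'[of k 1 v] by (simp add: e inner_add_left)
  from coord[of r] r have "a \<noteq> 0" by (auto simp: inner_commute)
  with coord show ?thesis by blast
qed

lemma axis_in_span_host_vector_eigenvectors:
  fixes \<alpha> \<gamma> k1 k2 \<mu>1 \<mu>2 :: real and i :: 3
  assumes \<gamma>: "\<gamma> \<noteq> 0" and \<mu>: "\<mu>1 \<noteq> \<mu>2"
  shows "axis i 1 \<in> span {vector [0, 1, 1], vector [\<gamma>, k1, \<mu>1 + \<alpha> + k1], vector [\<gamma>, k2, \<mu>2 + \<alpha> + k2]}"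
    (is "_ \<in> span {?u0, ?u1, ?u2}")
proof -
  have base: "?u0 \<in> span {?u0, ?u1, ?u2}" "?u1 \<in> span {?u0, ?u1, ?u2}" "?u2 \<in> span {?u0, ?u1, ?u2}"
    by (simp_all add: span_base)
  have scaled: "(\<mu>1 - \<mu>2) *\<^sub>R axis 3 1 = ?u1 - ?u2 - (k1 - k2) *\<^sub>R ?u0"
    by (simp add: vec_eq_iff forall_3 axis_def)
  have e3: "axis 3 1 = (1 / (\<mu>1 - \<mu>2)) *\<^sub>R (?u1 - ?u2 - (k1 - k2) *\<^sub>R ?u0)"
    using arg_cong[OF scaled, of "\<lambda>x. (1 / (\<mu>1 - \<mu>2)) *\<^sub>R x"] \<mu> by simp
  have e2: "axis 2 1 = ?u0 - axis 3 1"
    by (simp add: vec_eq_iff forall_3 axis_def)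
  have e1: "axis 1 1 = (1 / \<gamma>) *\<^sub>R (?u1 - k1 *\<^sub>R axis 2 1 - (\<mu>1 + \<alpha> + k1) *\<^sub>R axis 3 1)"
    using \<gamma> by (simp add: vec_eq_iff forall_3 axis_def)
  have "axis 3 1 \<in> span {?u0, ?u1, ?u2}"
    unfolding e3 using base by (intro span_scale span_diff) auto
  moreover from this have "axis 2 1 \<in> span {?u0, ?u1, ?u2}"
    unfolding e2 using base by (intro span_diff)
  moreover from calculation have "axis 1 1 \<in> span {?u0, ?u1, ?u2}"
    unfolding e1 using base by (intro span_scale span_diff) auto
  ultimately show ?thesis using exhaust_3[of i] by auto
qed

lemma host_vector_matrix_left_eigenbasis:
  fixes \<alpha> \<beta> \<gamma> \<epsilon> g :: real
  assumes pos: "0 < \<alpha>" "0 < \<beta>" "0 < \<gamma>" "0 < \<epsilon>" "0 < g" and stable: "\<beta> * \<gamma> < \<alpha> * g"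
  obtains \<mu>1 \<mu>2 :: real and u1 u2 :: "real^3"
  where "\<mu>1 < 0" "\<mu>2 < 0"
    "u1 v* host_vector_matrix \<alpha> \<beta> \<gamma> \<epsilon> g = \<mu>1 *\<^sub>R u1" "u2 v* host_vector_matrix \<alpha> \<beta> \<gamma> \<epsilon> g = \<mu>2 *\<^sub>R u2"
    "\<And>k. \<exists>a c1 c2. a \<noteq> 0 \<and> (\<forall>v. v $ k = a * (vector [0, 1, 1] \<bullet> v) + c1 * (u1 \<bullet> v) + c2 * (u2 \<bullet> v))"
proof -
  obtain \<mu>1 \<mu>2 where \<mu>: "\<mu>1 \<noteq> \<mu>2" "\<mu>1 < 0" "\<mu>2 < 0"
    and char: "(\<mu>1 + \<alpha>) * (\<mu>1 + \<epsilon> + g) = \<beta> * \<gamma>" "(\<mu>2 + \<alpha>) * (\<mu>2 + \<epsilon> + g) = \<beta> * \<gamma>"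
    using host_vector_matrix_eigenvalues[OF pos stable] by blast
  define k1 where "k1 = (\<mu>1 + \<alpha>) * \<epsilon> / \<mu>1"
  define k2 where "k2 = (\<mu>2 + \<alpha>) * \<epsilon> / \<mu>2"
  define u0 :: "real^3" where "u0 = vector [0, 1, 1]"
  define u1 :: "real^3" where "u1 = vector [\<gamma>, k1, \<mu>1 + \<alpha> + k1]"
  define u2 :: "real^3" where "u2 = vector [\<gamma>, k2, \<mu>2 + \<alpha> + k2]"
  define r :: "real^3" where "r = vector [\<beta> * \<epsilon>, \<alpha> * g - \<beta> * \<gamma>, \<alpha> * \<epsilon>]"
  have eig: "u1 v* host_vector_matrix \<alpha> \<beta> \<gamma> \<epsilon> g = \<mu>1 *\<^sub>R u1"
    "u2 v* host_vector_matrix \<alpha> \<beta> \<gamma> \<epsilon> g = \<mu>2 *\<^sub>R u2"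
    unfolding u1_def u2_def using \<mu> char
    by (auto intro!: host_vector_matrix_left_eigenvector simp: k1_def k2_def)
  have null: "host_vector_matrix \<alpha> \<beta> \<gamma> \<epsilon> g *v r = 0"
    unfolding r_def by (rule host_vector_matrix_right_null)
  have "u1 \<bullet> r = 0" "u2 \<bullet> r = 0"
    using \<mu> by (auto intro: left_eigenvector_orthogonal_right_null[OF _ null] eig)
  moreover have "u0 \<bullet> r \<noteq> 0"
  proof -
    have "u0 \<bullet> r = \<alpha> * g - \<beta> * \<gamma> + \<alpha> * \<epsilon>" by (simp add: u0_def r_def inner_vec_def sum_3)
    moreover have "0 < \<alpha> * \<epsilon>" using pos by simp
    ultimately show ?thesis using stable by linarith
  qed
  moreover have "r $ k \<noteq> 0" for k
    using pos stable exhaust_3[of k] by (auto simp: r_def)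
  moreover have "axis k 1 \<in> span {u0, u1, u2}" for k
    unfolding u0_def u1_def u2_def using pos \<mu> by (intro axis_in_span_host_vector_eigenvectors) auto
  ultimately have "\<exists>a c1 c2. a \<noteq> 0 \<and> (\<forall>v. v $ k = a * (u0 \<bullet> v) + c1 * (u1 \<bullet> v) + c2 * (u2 \<bullet> v))" for k
    by (intro coordinate_in_spanning_triple)
  from that[OF \<mu>(2,3) eig this[unfolded u0_def]] show thesis .
qed

lemma endemic_equilibrium_pos:
  fixes C0 bh gh bv gv :: real
  assumes pos: "C0 > 0" "bh > 0" "gh > 0" "bv > 0" "gv > 0" and R0: "R0 C0 bh gh bv gv > 1"
  shows "ih_e C0 bh gh bv gv > 0" "iv_e C0 bh gh bv gv > 0"
    "sh_e C0 bh gh bv gv > 0" "sv_e C0 bh gh bv gv > 0"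
    "bh * sh_e C0 bh gh bv gv * (bv * sv_e C0 bh gh bv gv) = gh * gv"
proof -
  have "1 < (bh / gv) * (C0 * bv / gh)" using R0 by (simp add: R0_def)
  then have N: "0 < C0 * bh * bv - gh * gv" using pos by (simp add: field_simps)
  have d: "0 < C0 * bh * bv + bv * gh" "0 < bh * bv + bh * gv" "0 < C0 * bh + gh" "0 < bv + gv"
    using pos by (simp_all add: add_pos_pos)
  have sh: "sh_e C0 bh gh bv gv = gh * (bv + gv) / (bv * (C0 * bh + gh))"
    unfolding sh_e_def ih_e_def using pos d by (simp add: field_simps)
  have sv: "sv_e C0 bh gh bv gv = gv * (C0 * bh + gh) / (bh * (bv + gv))"
    unfolding sv_e_def iv_e_def using pos d by (simp add: field_simps)
  show "ih_e C0 bh gh bv gv > 0" "iv_e C0 bh gh bv gv > 0"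
    unfolding ih_e_def iv_e_def using N pos by (simp_all add: add_pos_pos)
  show "sh_e C0 bh gh bv gv > 0" "sv_e C0 bh gh bv gv > 0"
    unfolding sh sv using pos by (simp_all add: add_pos_pos)
  show "bh * sh_e C0 bh gh bv gv * (bv * sv_e C0 bh gh bv gv) = gh * gv"
  proof -
    have "bh * (gh * Z / (bv * X)) * (bv * (gv * X / (bh * Z))) = gh * gv" if "0 < X" "0 < Z" for X Z :: real
      using pos that by (simp add: field_simps)
    from this[OF d(3,4)] show ?thesis unfolding sh sv .
  qed
qed

lemma C_e_eq_host_vector_matrix:
  "C_e C0 bh gh bv gv = host_vector_matrix (gh + bh * iv_e C0 bh gh bv gv) (bh * sh_e C0 bh gh bv gv)
     (bv * sv_e C0 bh gh bv gv) (bv * ih_e C0 bh gh bv gv) gv"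
  by (simp add: C_e_def host_vector_matrix_def Let_def)

lemma C_e_left_null: "vector [0, 1, 1] v* C_e C0 bh gh bv gv = 0"
  unfolding C_e_eq_host_vector_matrix by (rule host_vector_matrix_left_null)

lemma vector_4 [simp]:
  "(vector [a, b, c, d] :: ('a::zero)^4) $ 1 = a" "(vector [a, b, c, d] :: ('a::zero)^4) $ 2 = b"
  "(vector [a, b, c, d] :: ('a::zero)^4) $ 3 = c" "(vector [a, b, c, d] :: ('a::zero)^4) $ 4 = d"
  unfolding vector_def by simp_all

lemma sigma_e_left_total_vector_nonzero:
  fixes C0 bh gh bv gv :: real
  assumes pos: "C0 > 0" "bh > 0" "gh > 0" "bv > 0" "gv > 0" and R0: "R0 C0 bh gh bv gv > 1"
  shows "vector [0, 1, 1] v* sigma_e C0 bh gh bv gv \<noteq> 0"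
proof -
  have "(vector [0, 1, 1] v* sigma_e C0 bh gh bv gv) $ 2 = sqrt (gv * (C0 + sv_e C0 bh gh bv gv))"
    by (simp add: sigma_e_def Let_def vector_matrix_mult_def sum_3)
  moreover have "0 < gv * (C0 + sv_e C0 bh gh bv gv)"
    using pos endemic_equilibrium_pos[OF pos R0] by simp
  ultimately have "0 < (vector [0, 1, 1] v* sigma_e C0 bh gh bv gv) $ 2" by (metis real_sqrt_gt_zero)
  then show ?thesis by auto
qed

lemma C_e_left_eigenbasis:
  fixes C0 bh gh bv gv :: real
  assumes pos: "C0 > 0" "bh > 0" "gh > 0" "bv > 0" "gv > 0" and R0: "R0 C0 bh gh bv gv > 1"
  obtains \<mu>1 \<mu>2 :: real and u1 u2 :: "real^3"
  where "\<mu>1 < 0" "\<mu>2 < 0"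
    "u1 v* C_e C0 bh gh bv gv = \<mu>1 *\<^sub>R u1" "u2 v* C_e C0 bh gh bv gv = \<mu>2 *\<^sub>R u2"
    "\<And>k. \<exists>a c1 c2. a \<noteq> 0 \<and> (\<forall>v. v $ k = a * (vector [0, 1, 1] \<bullet> v) + c1 * (u1 \<bullet> v) + c2 * (u2 \<bullet> v))"
proof -
  note equilibrium = endemic_equilibrium_pos[OF pos R0]
  have coefficients: "0 < gh + bh * iv_e C0 bh gh bv gv" "0 < bh * sh_e C0 bh gh bv gv"
    "0 < bv * sv_e C0 bh gh bv gv" "0 < bv * ih_e C0 bh gh bv gv"
    using pos equilibrium by (simp_all add: add_pos_pos)
  have "bh * sh_e C0 bh gh bv gv * (bv * sv_e C0 bh gh bv gv) < (gh + bh * iv_e C0 bh gh bv gv) * gv"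
    using equilibrium pos by (simp add: distrib_right)
  from host_vector_matrix_left_eigenbasis[OF coefficients pos(5) this] show thesis
    unfolding C_e_eq_host_vector_matrix[symmetric] using that .
qed

theorem lemma1:
  fixes M :: "'a measure"
    and C0 bh gh bv gv :: real
    and B :: "real \<Rightarrow> 'a \<Rightarrow> real^4"
    and Phi :: "real \<Rightarrow> 'a \<Rightarrow> real^3"
  assumes pos: "C0 > 0" "bh > 0" "gh > 0" "bv > 0" "gv > 0"
    and R0_gt: "R0 C0 bh gh bv gv > 1"
    and BM: "std_BM M B"
    and init_meas: "Phi 0 \<in> borel_measurable M"
    and init_L2: "\<forall>k. integrable M (\<lambda>\<omega>. (Phi 0 \<omega> $ k)\<^sup>2)"
    and init_indep: "prob_space.indep_set M
        {Phi 0 -` A \<inter> space M | A. A \<in> sets (borel :: (real^3) measure)}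
        {(\<lambda>\<omega>. restrict (\<lambda>t. B t \<omega>) {0..}) -` A \<inter> space M | A.
           A \<in> sets (PiM {0..} (\<lambda>_. (borel :: (real^4) measure)))}"
    and cont: "\<forall>\<omega>\<in>space M. continuous_on {0..} (\<lambda>t. Phi t \<omega>)"
    and sde: "\<forall>\<omega>\<in>space M. \<forall>t\<ge>0.
        Phi t \<omega> = Phi 0 \<omega> + integral {0..t} (\<lambda>s. C_e C0 bh gh bv gv *v Phi s \<omega>)
                   + sigma_e C0 bh gh bv gv *v B t \<omega>"
  shows "\<forall>k. filterlim (\<lambda>t. prob_space.variance M (\<lambda>\<omega>. Phi t \<omega> $ k)) at_top at_top"
proof
  fix k :: 3
  obtain \<mu>1 \<mu>2 u1 u2 where \<mu>: "\<mu>1 < 0" "\<mu>2 < 0"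
    and eig: "u1 v* C_e C0 bh gh bv gv = \<mu>1 *\<^sub>R u1" "u2 v* C_e C0 bh gh bv gv = \<mu>2 *\<^sub>R u2"
    and coord: "\<And>k. \<exists>a c1 c2. a \<noteq> 0 \<and>
        (\<forall>v. v $ k = a * (vector [0, 1, 1] \<bullet> v) + c1 * (u1 \<bullet> v) + c2 * (u2 \<bullet> v))"
    using C_e_left_eigenbasis[OF pos R0_gt] by blast
  obtain a c1 c2 where "a \<noteq> 0" "\<And>v. v $ k = a * (vector [0, 1, 1] \<bullet> v) + c1 * (u1 \<bullet> v) + c2 * (u2 \<bullet> v)"
    using coord[of k] by blast
  then show "filterlim (\<lambda>t. prob_space.variance M (\<lambda>\<omega>. Phi t \<omega> $ k)) at_top at_top"
    using eig \<mu> by (intro linear_sde_coordinate_variance_at_top[OF BM init_meas init_L2 cont sde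
        C_e_left_null sigma_e_left_total_vector_nonzero[OF pos R0_gt]])
qed

end
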